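(* Let $V_0=\mathbb{C}[x_1,x_2,\dots]$ with each $x_i$ primitive, let $A$ be a commutative $\mathbb{C}$-algebra, let $r$ be an $A$-valued bicharacter on $V_0$, put $q_{mn}=r(x_m\otimes x_n)$ and \[ Q_p=\sum_{m,n\ge1}q_{mn}\frac{\partial^2}{\partial x_m\partial x_n}. \] Let $s=r\circ r^t$ be the symmetrization of $r$ and $\bullet=\bullet_s$. Then for all $P\in V_0$, \[ e^{Q_p}(P)=\mathrm{EQ}_r(P)=\sum r(P'\otimes P'')P''', \] and moreover $e^{Q_p}(P)=P^{\bullet}$. Furthermore $e^{Q_p}$ is a homomorphism from $(V_0\otimes A,\cdot)$ to $(V_0\otimes A,\bullet)$.
   Context: Hopf structure on $V_0$: $\Delta(x_i)=x_i\otimes1+1\otimes x_i$, $\eta(x_i)=0$. Sweedler notation: $\Delta(P)=\sum P'\otimes P''$, $\Delta^2(P)=\sum P'\otimes P''\otimes P'''$. An $A$-valued bicharacter is a linear map $r:V_0\otimes V_0\to A$ with $r(1\otimes a)=\eta(a)=r(a\otimes1)$, $r(ab\otimes c)=\sum r(a\otimes c')r(b\otimes c'')$, $r(a\otimes bc)=\sum r(a'\otimes b)r(a''\otimes c)$. $r^t(a\otimes b)=r(b\otimes a)$, and $(r\circ t)(a\otimes b)=\sum r(a'\otimes b')t(a''\otimes b'')$; the symmetrization $s=r\circ r^t$ is a symmetric bicharacter. The product $\bullet_s$ on $V_0\otimes A$ is the $A$-bilinear extension of $a\bullet_s b=\sum a'b'\,s(a''\otimes b'')$; it is associative and commutative with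 unit $1$. For $P\in V_0$ written as a linear combination of monomials $x_{i_1}x_{i_2}\cdots x_{i_k}$, the $\bullet$ polynomial $P^\bullet$ is the same linear combination of the elements $x_{i_1}\bullet x_{i_2}\bullet\cdots\bullet x_{i_k}$ (with the empty monomial $1$ mapped to $1$). $e^{Q_p}=\sum_k Q_p^k/k!$, acting $A$-linearly. *)

theory Defs
  imports Complex_Main "HOL-Library.Poly_Mapping" "HOL-Library.Product_Plus"
    "HOL-Library.Groups_Big_Fun"
begin

text \<open>Monomials in the variables x_0, x_1, ... are exponent vectors nat =>0 nat.
  V0 = C[x_0,x_1,...] is (mon =>0 complex); V0 (x) A = A[x_0,x_1,...] is (mon =>0 'a);
  V0 (x) V0 is ((mon * mon) =>0 complex) with the (convolution) tensor product algebra
  structure; V0 (x) V0 (x) V0 is ((mon * (mon * mon)) =>0 complex).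
  A commutative C-algebra A is a commutative ring 'a together with a ring
  homomorphism iota : complex => 'a (the structure map); c.a = iota c * a.\<close>

type_synonym mon = "nat \<Rightarrow>\<^sub>0 nat"
type_synonym V0 = "mon \<Rightarrow>\<^sub>0 complex"
type_synonym T2 = "(mon \<times> mon) \<Rightarrow>\<^sub>0 complex"
type_synonym T3 = "(mon \<times> mon \<times> mon) \<Rightarrow>\<^sub>0 complex"

definition calg_hom :: "(complex \<Rightarrow> 'a::comm_ring_1) \<Rightarrow> bool" where
  "calg_hom iota \<longleftrightarrow> (\<forall>x y. iota (x + y) = iota x + iota y) \<and>
     (\<forall>x y. iota (x * y) = iota x * iota y) \<and> iota 1 = 1"

definition Var :: "nat \<Rightarrow> mon" where "Var i = Poly_Mapping.single i 1"

definition mono :: "mon \<Rightarrow> V0" where "mono m = Poly_Mapping.single m 1"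

definition xv :: "nat \<Rightarrow> V0" where "xv i = mono (Var i)"

definition tensor :: "V0 \<Rightarrow> V0 \<Rightarrow> T2" where
  "tensor a b = (\<Sum>m\<in>Poly_Mapping.keys a. \<Sum>n\<in>Poly_Mapping.keys b. Poly_Mapping.single (m, n) (Poly_Mapping.lookup a m * Poly_Mapping.lookup b n))"

definition counit :: "V0 \<Rightarrow> complex" where "counit P = Poly_Mapping.lookup P 0"

definition delta_mon :: "mon \<Rightarrow> T2" where
  "delta_mon m = (\<Prod>i\<in>Poly_Mapping.keys m. (tensor (xv i) 1 + tensor 1 (xv i)) ^ Poly_Mapping.lookup m i)"

definition delta :: "V0 \<Rightarrow> T2" where
  "delta P = (\<Sum>m\<in>Poly_Mapping.keys P. Poly_Mapping.map (\<lambda>z. Poly_Mapping.lookup P m * z) (delta_mon m))"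

text \<open>Delta^2 = (Delta (x) id) o Delta\<close>
definition delta2 :: "V0 \<Rightarrow> T3" where
  "delta2 P = (\<Sum>(u, w)\<in>Poly_Mapping.keys (delta P). \<Sum>(u1, u2)\<in>Poly_Mapping.keys (delta (mono u)).
      Poly_Mapping.single (u1, u2, w) (Poly_Mapping.lookup (delta P) (u, w) * Poly_Mapping.lookup (delta (mono u)) (u1, u2)))"

text \<open>Sweedler sum  sum f(T', T'')  of a bilinear expression f over a tensor T\<close>
definition sw2 :: "(complex \<Rightarrow> 'a::comm_ring_1) \<Rightarrow> (V0 \<Rightarrow> V0 \<Rightarrow> 'a) \<Rightarrow> T2 \<Rightarrow> 'a" where
  "sw2 iota f T = (\<Sum>(u, v)\<in>Poly_Mapping.keys T. iota (Poly_Mapping.lookup T (u, v)) * f (mono u) (mono v))"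

definition lin_map2 :: "(complex \<Rightarrow> 'a::comm_ring_1) \<Rightarrow> (T2 \<Rightarrow> 'a) \<Rightarrow> bool" where
  "lin_map2 iota r \<longleftrightarrow> (\<forall>S T. r (S + T) = r S + r T) \<and>
     (\<forall>c T. r (Poly_Mapping.map (\<lambda>z. c * z) T) = iota c * r T)"

definition bicharacter :: "(complex \<Rightarrow> 'a::comm_ring_1) \<Rightarrow> (T2 \<Rightarrow> 'a) \<Rightarrow> bool" where
  "bicharacter iota r \<longleftrightarrow> lin_map2 iota r \<and>
     (\<forall>a. r (tensor 1 a) = iota (counit a) \<and> r (tensor a 1) = iota (counit a)) \<and>
     (\<forall>a b c. r (tensor (a * b) c) = sw2 iota (\<lambda>c1 c2. r (tensor a c1) * r (tensor b c2)) (delta c)) \<and>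
     (\<forall>a b c. r (tensor a (b * c)) = sw2 iota (\<lambda>a1 a2. r (tensor a1 b) * r (tensor a2 c)) (delta a))"

definition lin_ext :: "(complex \<Rightarrow> 'a::comm_ring_1) \<Rightarrow> (mon \<Rightarrow> mon \<Rightarrow> 'a) \<Rightarrow> T2 \<Rightarrow> 'a" where
  "lin_ext iota f T = (\<Sum>(m, n)\<in>Poly_Mapping.keys T. iota (Poly_Mapping.lookup T (m, n)) * f m n)"

definition transp :: "(complex \<Rightarrow> 'a::comm_ring_1) \<Rightarrow> (T2 \<Rightarrow> 'a) \<Rightarrow> T2 \<Rightarrow> 'a" where
  "transp iota r = lin_ext iota (\<lambda>m n. r (tensor (mono n) (mono m)))"

text \<open>(r o t)(a (x) b) = sum r(a' (x) b') t(a'' (x) b'')\<close>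
definition conv :: "(complex \<Rightarrow> 'a::comm_ring_1) \<Rightarrow> (T2 \<Rightarrow> 'a) \<Rightarrow> (T2 \<Rightarrow> 'a) \<Rightarrow> T2 \<Rightarrow> 'a" where
  "conv iota r t = lin_ext iota (\<lambda>m n.
     sw2 iota (\<lambda>a1 a2. sw2 iota (\<lambda>b1 b2. r (tensor a1 b1) * t (tensor a2 b2)) (delta (mono n)))
       (delta (mono m)))"

definition symmetrization :: "(complex \<Rightarrow> 'a::comm_ring_1) \<Rightarrow> (T2 \<Rightarrow> 'a) \<Rightarrow> T2 \<Rightarrow> 'a" where
  "symmetrization iota r = conv iota r (transp iota r)"

definition embA :: "(complex \<Rightarrow> 'a::comm_ring_1) \<Rightarrow> V0 \<Rightarrow> (mon \<Rightarrow>\<^sub>0 'a)" where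
  "embA iota P = Poly_Mapping.map iota P"

definition smultA :: "'a::comm_ring_1 \<Rightarrow> (mon \<Rightarrow>\<^sub>0 'a) \<Rightarrow> (mon \<Rightarrow>\<^sub>0 'a)" where
  "smultA c F = Poly_Mapping.map (\<lambda>z. c * z) F"

text \<open>the product bullet_s on V0 (x) A: A-bilinear extension of
  a bullet b = sum a' b' s(a'' (x) b'')\<close>
definition bullet_mon :: "(complex \<Rightarrow> 'a::comm_ring_1) \<Rightarrow> (T2 \<Rightarrow> 'a) \<Rightarrow> mon \<Rightarrow> mon \<Rightarrow> (mon \<Rightarrow>\<^sub>0 'a)" where
  "bullet_mon iota s \<alpha> \<beta> =
     (\<Sum>(a1, a2)\<in>Poly_Mapping.keys (delta (mono \<alpha>)). \<Sum>(b1, b2)\<in>Poly_Mapping.keys (delta (mono \<beta>)).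
        smultA (iota (Poly_Mapping.lookup (delta (mono \<alpha>)) (a1, a2) * Poly_Mapping.lookup (delta (mono \<beta>)) (b1, b2))
                * s (tensor (mono a2) (mono b2)))
          (embA iota (mono a1 * mono b1)))"

definition bullet :: "(complex \<Rightarrow> 'a::comm_ring_1) \<Rightarrow> (T2 \<Rightarrow> 'a) \<Rightarrow> (mon \<Rightarrow>\<^sub>0 'a) \<Rightarrow> (mon \<Rightarrow>\<^sub>0 'a) \<Rightarrow> (mon \<Rightarrow>\<^sub>0 'a)" where
  "bullet iota s F G = (\<Sum>\<alpha>\<in>Poly_Mapping.keys F. \<Sum>\<beta>\<in>Poly_Mapping.keys G.
      smultA (Poly_Mapping.lookup F \<alpha> * Poly_Mapping.lookup G \<beta>) (bullet_mon iota s \<alpha> \<beta>))"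

text \<open>bullet polynomial: each monomial x^alpha is written as the word
  x_{i1} x_{i2} ... x_{ik} (indices in increasing order, with multiplicity) and replaced by
  x_{i1} bullet (x_{i2} bullet ( ... bullet (x_{ik} bullet 1)))\<close>
definition mon_word :: "mon \<Rightarrow> nat list" where
  "mon_word \<alpha> = concat (map (\<lambda>i. replicate (Poly_Mapping.lookup \<alpha> i) i) (sorted_list_of_set (Poly_Mapping.keys \<alpha>)))"

definition bullet_word :: "(complex \<Rightarrow> 'a::comm_ring_1) \<Rightarrow> (T2 \<Rightarrow> 'a) \<Rightarrow> nat list \<Rightarrow> (mon \<Rightarrow>\<^sub>0 'a)" where
  "bullet_word iota s ws = foldr (\<lambda>i acc. bullet iota s (embA iota (xv i)) acc) ws 1"

definition bullet_poly :: "(complex \<Rightarrow> 'a::comm_ring_1) \<Rightarrow> (T2 \<Rightarrow> 'a) \<Rightarrow> V0 \<Rightarrow> (mon \<Rightarrow>\<^sub>0 'a)" where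
  "bullet_poly iota s P = (\<Sum>\<alpha>\<in>Poly_Mapping.keys P. smultA (iota (Poly_Mapping.lookup P \<alpha>)) (bullet_word iota s (mon_word \<alpha>)))"

definition pderivA :: "nat \<Rightarrow> (mon \<Rightarrow>\<^sub>0 'a::comm_ring_1) \<Rightarrow> (mon \<Rightarrow>\<^sub>0 'a)" where
  "pderivA i F = (\<Sum>\<alpha>\<in>Poly_Mapping.keys F. Poly_Mapping.single (\<alpha> - Var i) (of_nat (Poly_Mapping.lookup \<alpha> i) * Poly_Mapping.lookup F \<alpha>))"

text \<open>Q_p = sum_{m,n} q_mn d^2/(dx_m dx_n), q_mn = r(x_m (x) x_n); the (formally infinite)
  sum has only finitely many nonzero terms on each element and is taken with Sum_any\<close>
definition Qp :: "(T2 \<Rightarrow> 'a::comm_ring_1) \<Rightarrow> (mon \<Rightarrow>\<^sub>0 'a) \<Rightarrow> (mon \<Rightarrow>\<^sub>0 'a)" where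
  "Qp r F = Sum_any (\<lambda>(m, n). smultA (r (tensor (xv m) (xv n))) (pderivA m (pderivA n F)))"

text \<open>e^{Q_p} = sum_k Q_p^k / k!  (finitely many nonzero terms on each element)\<close>
definition expQp :: "(complex \<Rightarrow> 'a::comm_ring_1) \<Rightarrow> (T2 \<Rightarrow> 'a) \<Rightarrow> (mon \<Rightarrow>\<^sub>0 'a) \<Rightarrow> (mon \<Rightarrow>\<^sub>0 'a)" where
  "expQp iota r F = Sum_any (\<lambda>k. smultA (iota (1 / of_nat (fact k))) ((Qp r ^^ k) F))"

text \<open>EQ_r(P) = sum r(P' (x) P'') P'''\<close>
definition EQ :: "(complex \<Rightarrow> 'a::comm_ring_1) \<Rightarrow> (T2 \<Rightarrow> 'a) \<Rightarrow> V0 \<Rightarrow> (mon \<Rightarrow>\<^sub>0 'a)" where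
  "EQ iota r P = (\<Sum>(u, v, w)\<in>Poly_Mapping.keys (delta2 P).
      smultA (iota (Poly_Mapping.lookup (delta2 P) (u, v, w)) * r (tensor (mono u) (mono v))) (embA iota (mono w)))"

end

theory Submission
  imports Defs
begin

text \<open>Write \<open>L\<^sub>i = \<Sum>\<^sub>n s(x\<^sub>i \<otimes> x\<^sub>n) \<partial>\<^sub>n\<close> (\<open>sderiv i\<close> below), where \<open>s(x\<^sub>i \<otimes> x\<^sub>n) = q\<^sub>i\<^sub>n + q\<^sub>n\<^sub>i\<close>. Then \<open>[Q\<^sub>p, x\<^sub>i] = L\<^sub>i\<close> and \<open>L\<^sub>i\<close> commutes
  with \<open>Q\<^sub>p\<close>, so \<open>e\<^sup>Q\<^sup>p(x\<^sub>i F) = x\<^sub>i e\<^sup>Q\<^sup>p F + L\<^sub>i e\<^sup>Q\<^sup>p F\<close>. On the other side, the bicharacter identities turn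
  multiplication by \<open>x\<^sub>i\<close> inside \<open>r\<close> (and hence inside \<open>s\<close>) into the derivation \<open>\<Sum>\<^sub>n q\<^sub>i\<^sub>n \<partial>\<^sub>n\<close>; this gives
  \<open>x\<^sub>i \<bullet> G = x\<^sub>i G + L\<^sub>i G\<close>, shows that \<open>L\<^sub>i\<close> is a derivation of \<open>\<bullet>\<close>, and hence that
  \<open>x\<^sub>i \<bullet> (H \<bullet> K) = (x\<^sub>i \<bullet> H) \<bullet> K\<close>. Induction on monomials now gives
  \<open>e\<^sup>Q\<^sup>p(x\<^sup>a x\<^sup>b) = e\<^sup>Q\<^sup>p(x\<^sup>a) \<bullet> e\<^sup>Q\<^sup>p(x\<^sup>b)\<close>, in particular \<open>e\<^sup>Q\<^sup>p(x\<^sub>i\<^sub>1 \<cdots> x\<^sub>i\<^sub>k) = x\<^sub>i\<^sub>1 \<bullet> \<cdots> \<bullet> x\<^sub>i\<^sub>k\<close>.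
  The same identities show that \<open>EQ\<^sub>r(x\<^sup>a)\<close> satisfies the recursion of \<open>e\<^sup>Q\<^sup>p(x\<^sup>a)\<close>, so the two agree.\<close>

abbreviation lookup :: "('k \<Rightarrow>\<^sub>0 'b::zero) \<Rightarrow> 'k \<Rightarrow> 'b" where "lookup \<equiv> Poly_Mapping.lookup"
abbreviation keys :: "('k \<Rightarrow>\<^sub>0 'b::zero) \<Rightarrow> 'k set" where "keys \<equiv> Poly_Mapping.keys"
abbreviation single :: "'k \<Rightarrow> 'b::zero \<Rightarrow> 'k \<Rightarrow>\<^sub>0 'b" where "single \<equiv> Poly_Mapping.single"

lemma lookup_map: "lookup (Poly_Mapping.map f p) k = (f (lookup p k) when lookup p k \<noteq> 0)"
  by transfer simp

lemma poly_mapping_eq_sum_single: "p = (\<Sum>k\<in>keys p. single k (lookup p k))"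
  by (rule poly_mapping_eqI) (auto simp: lookup_sum lookup_single when_def in_keys_iff)

lemma lookup_smultA [simp]: "lookup (smultA c F) k = c * lookup F k"
  by (simp add: smultA_def lookup_map when_def)

lemma smultA_single [simp]: "smultA c (single k a) = single k (c * a)"
  by (rule poly_mapping_eqI) (simp add: lookup_single when_def)

lemma smultA_conv_mult: "smultA c F = single 0 c * F"
  unfolding smultA_def by (rule mult_map_scale_conv_mult)

lemma smultA_mult: "smultA c (F * G) = smultA c F * G" "smultA c (F * G) = F * smultA c G"
  by (simp_all add: smultA_conv_mult algebra_simps)

lemma keys_smultA: "keys (smultA c F) \<subseteq> keys F"
  by (auto simp: in_keys_iff)

interpretation smultA: module smultA
  by standard (auto intro!: poly_mapping_eqI simp: lookup_add algebra_simps)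

lemma calg_hom_simps:
  assumes "calg_hom iota"
  shows "iota (x + y) = iota x + iota y" "iota (x * y) = iota x * iota y" "iota 1 = 1" "iota 0 = 0"
    "iota (of_nat n) = of_nat n"
proof -
  show hom: "iota (x + y) = iota x + iota y" "iota (x * y) = iota x * iota y" "iota 1 = 1" for x y
    using assms unfolding calg_hom_def by auto
  show zero: "iota 0 = 0"
    using hom(1)[of 0 0] by simp
  show "iota (of_nat n) = of_nat n"
    by (induction n) (simp_all add: zero hom)
qed

definition lincomb :: "('a::zero \<Rightarrow> 'b \<Rightarrow> 'b::comm_monoid_add) \<Rightarrow> ('k \<Rightarrow> 'b) \<Rightarrow> ('k \<Rightarrow>\<^sub>0 'a) \<Rightarrow> 'b"
  where "lincomb scale g T = (\<Sum>k\<in>keys T. scale (lookup T k) (g k))"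

context module
begin

lemma lincomb_superset:
  assumes "finite S" "keys T \<subseteq> S"
  shows "lincomb scale g T = (\<Sum>k\<in>S. lookup T k *s g k)"
  unfolding lincomb_def by (rule sum.mono_neutral_left) (use assms in \<open>auto simp: in_keys_iff\<close>)

lemma lincomb_add: "lincomb scale g (T1 + T2) = lincomb scale g T1 + lincomb scale g T2"
proof -
  let ?S = "keys T1 \<union> keys T2"
  have "lincomb scale g (T1 + T2) = (\<Sum>k\<in>?S. lookup (T1 + T2) k *s g k)"
    by (rule lincomb_superset) (use keys_add[of T1 T2] in auto)
  also have "\<dots> = (\<Sum>k\<in>?S. lookup T1 k *s g k) + (\<Sum>k\<in>?S. lookup T2 k *s g k)"
    by (simp add: lookup_add scale_left_distrib sum.distrib)
  also have "\<dots> = lincomb scale g T1 + lincomb scale g T2"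
    by (subst (1 2) lincomb_superset[where S="?S"]) auto
  finally show ?thesis .
qed

lemma lincomb_zero [simp]: "lincomb scale g 0 = 0"
  by (simp add: lincomb_def)

lemma lincomb_sum: "lincomb scale g (\<Sum>j\<in>J. T j) = (\<Sum>j\<in>J. lincomb scale g (T j))"
  by (induction J rule: infinite_finite_induct) (auto simp: lincomb_add)

lemma lincomb_single [simp]: "lincomb scale g (single k c) = c *s g k"
  by (simp add: lincomb_def)

lemma lincomb_cong: "(\<And>k. k \<in> keys T \<Longrightarrow> g k = g' k) \<Longrightarrow> lincomb scale g T = lincomb scale g' T"
  unfolding lincomb_def by (rule sum.cong) auto

lemma lincomb_add_fun: "lincomb scale (\<lambda>k. g1 k + g2 k) T = lincomb scale g1 T + lincomb scale g2 T"
  by (simp add: lincomb_def scale_right_distrib sum.distrib)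

lemma lincomb_sum_fun: "lincomb scale (\<lambda>k. \<Sum>j\<in>J. g j k) T = (\<Sum>j\<in>J. lincomb scale (g j) T)"
  unfolding lincomb_def scale_sum_right by (rule sum.swap)

lemma lincomb_zero_fun [simp]:
  "lincomb scale (\<lambda>k. 0) T = 0" "lincomb scale (\<lambda>(u, w). 0) T = 0"
  by (simp_all add: lincomb_def split_def)

lemma module_hom_lincomb:
  assumes "module_hom scale scale \<phi>"
  shows "\<phi> (lincomb scale g T) = lincomb scale (\<lambda>k. \<phi> (g k)) T"
  unfolding lincomb_def module_hom.sum[OF assms] module_hom.scale[OF assms] ..

lemma lincomb_map_scale: "lincomb scale g (Poly_Mapping.map (\<lambda>z. c * z) T) = c *s lincomb scale g T"
proof -
  have "lincomb scale g (Poly_Mapping.map (\<lambda>z. c * z) T)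
      = (\<Sum>k\<in>keys T. lookup (Poly_Mapping.map (\<lambda>z. c * z) T) k *s g k)"
    by (rule lincomb_superset) (auto simp: in_keys_iff lookup_map when_def)
  also have "\<dots> = (\<Sum>k\<in>keys T. c *s (lookup T k *s g k))"
    by (rule sum.cong) (auto simp: lookup_map when_def)
  finally show ?thesis
    by (simp add: lincomb_def scale_sum_right)
qed

lemma lincomb_mult_single:
  fixes T :: "'k::comm_monoid_add \<Rightarrow>\<^sub>0 'a"
  shows "lincomb scale g (T * single d c) = c *s lincomb scale (\<lambda>k. g (k + d)) T"
proof -
  have "T * single d c = (\<Sum>k\<in>keys T. single (k + d) (lookup T k * c))"
    by (subst poly_mapping_eq_sum_single[of T]) (simp add: sum_distrib_right mult_single)
  then have "lincomb scale g (T * single d c) = (\<Sum>k\<in>keys T. (lookup T k * c) *s g (k + d))"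
    by (simp add: lincomb_sum)
  then show ?thesis
    by (simp add: lincomb_def scale_sum_right mult.commute)
qed

end

section \<open>Monomials and their coproduct\<close>

lemma lookup_Var: "lookup (Var i) j = (if j = i then 1 else 0)"
  by (simp add: Var_def lookup_single when_def)

lemma keys_Var [simp]: "keys (Var i) = {i}"
  by (simp add: Var_def)

lemma Var_neq_zero [simp]: "Var i \<noteq> 0"
  by (metis keys_Var keys_zero empty_not_insert)

lemma Var_inject [simp]: "Var n = Var m \<longleftrightarrow> n = m"
  by (metis keys_Var singleton_inject)

lemma mono_mult: "mono a * mono b = mono (a + b)"
  by (simp add: mono_def mult_single)

lemma mono_zero: "mono 0 = 1"
  by (simp add: mono_def)

lemma lookup_mono: "lookup (mono a) b = (if b = a then 1 else 0)"
  by (simp add: mono_def lookup_single when_def)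

lemma tensor_mono: "tensor (mono a) (mono b) = single (a, b) 1"
  by (simp add: tensor_def lookup_mono mono_def)

lemma xv_mult_mono: "xv i * mono a = mono (a + Var i)"
  by (simp add: xv_def mono_mult add.commute)

lemma add_Var_minus_Var: "a + Var i - Var i = a"
  by (rule poly_mapping_eqI) (simp add: lookup_add lookup_minus lookup_Var)

lemma minus_Var_add_Var: "lookup a i \<noteq> 0 \<Longrightarrow> a - Var i + Var i = a"
  by (rule poly_mapping_eqI) (auto simp: lookup_add lookup_minus lookup_Var)

lemma add_Var_minus_Var_commute: "n \<noteq> i \<Longrightarrow> a + Var i - Var n = a - Var n + Var i"
  by (rule poly_mapping_eqI) (simp add: lookup_add lookup_minus lookup_Var)

lemma mon_add_eq_zero_iff: "(u::mon) + v = 0 \<longleftrightarrow> u = 0 \<and> v = 0"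
  by (auto simp: poly_mapping_eq_iff lookup_add fun_eq_iff)

definition mon_degree :: "mon \<Rightarrow> nat" where
  "mon_degree a = (\<Sum>i\<in>keys a. lookup a i)"

lemma mon_degree_add: "mon_degree (a + b) = mon_degree a + mon_degree b"
proof -
  have deg: "mon_degree c = (\<Sum>i\<in>keys a \<union> keys b. lookup c i)" if "keys c \<subseteq> keys a \<union> keys b" for c
    unfolding mon_degree_def by (rule sum.mono_neutral_left) (use that in \<open>auto simp: in_keys_iff\<close>)
  show ?thesis
    using keys_add[of a b] by (simp add: deg lookup_add sum.distrib)
qed

lemma mon_degree_zero [simp]: "mon_degree 0 = 0"
  by (simp add: mon_degree_def)

lemma mon_degree_Var [simp]: "mon_degree (Var i) = 1"
  by (simp add: mon_degree_def lookup_Var)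

lemma mon_induct [case_names zero add_Var]:
  assumes "P 0" and "\<And>a i. P a \<Longrightarrow> P (a + Var i)"
  shows "P a"
proof (induction "mon_degree a" arbitrary: a)
  case 0
  then have "a = 0"
    by (auto simp: mon_degree_def intro!: poly_mapping_eqI) (metis in_keys_iff)
  then show ?case using assms(1) by simp
next
  case (Suc d)
  then obtain i where "i \<in> keys a"
    by (metis keys_eq_empty ex_in_conv mon_degree_def sum.empty nat.distinct(1))
  then have a: "a = (a - Var i) + Var i"
    by (simp add: minus_Var_add_Var in_keys_iff)
  then have "mon_degree (a - Var i) = d"
    using Suc(2) mon_degree_add[of "a - Var i" "Var i"] by simp
  with Suc(1) have "P (a - Var i)" by simp
  with assms(2) a show ?case by metis
qed

definition delta_Var :: "nat \<Rightarrow> T2" where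
  "delta_Var i = single (Var i, 0) 1 + single (0, Var i) 1"

lemma delta_mono: "delta (mono a) = delta_mon a"
proof -
  have "Poly_Mapping.map (\<lambda>z. z) D = D" for D :: T2
    by (rule poly_mapping_eqI) (simp add: lookup_map when_def)
  then show ?thesis
    by (simp add: delta_def lookup_mono mono_def)
qed

lemma delta_mon_zero: "delta_mon 0 = 1"
  by (simp add: delta_mon_def)

lemma delta_mon_add_Var: "delta_mon (a + Var i) = delta_mon a * delta_Var i"
proof -
  have tensor_xv: "tensor (xv j) 1 + tensor 1 (xv j) = delta_Var j" for j
    by (simp add: xv_def delta_Var_def tensor_mono flip: mono_zero)
  have delta_mon: "delta_mon b = (\<Prod>j\<in>insert i (keys a). delta_Var j ^ lookup b j)"
    if "keys b \<subseteq> insert i (keys a)" for b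
    unfolding delta_mon_def tensor_xv
    by (rule prod.mono_neutral_left) (use that in \<open>auto simp: in_keys_iff\<close>)
  have "keys (a + Var i) \<subseteq> insert i (keys a)"
    using keys_add[of a "Var i"] by auto
  then have "delta_mon (a + Var i)
      = (\<Prod>j\<in>insert i (keys a). delta_Var j ^ lookup a j) * (\<Prod>j\<in>insert i (keys a). delta_Var j ^ (if j = i then 1 else 0))"
    by (simp add: delta_mon lookup_add lookup_Var power_add prod.distrib)
  also have "(\<Prod>j\<in>insert i (keys a). delta_Var j ^ (if j = i then 1 else 0)) = delta_Var i"
    by (subst prod.remove[of _ i]) (auto intro!: prod.neutral)
  also have "(\<Prod>j\<in>insert i (keys a). delta_Var j ^ lookup a j) = delta_mon a"
    by (rule delta_mon[symmetric]) auto
  finally show ?thesis .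
qed

lemma keys_delta_mon: "(u, w) \<in> keys (delta_mon a) \<Longrightarrow> u + w = a"
proof (induction a arbitrary: u w rule: mon_induct)
  case zero
  then show ?case by (simp add: delta_mon_zero zero_prod_def)
next
  case (add_Var a i)
  have "keys (delta_Var i) \<subseteq> {(Var i, 0), (0, Var i)}"
    unfolding delta_Var_def using keys_add[of "single (Var i, 0) (1::complex)" "single (0, Var i) 1"] by auto
  with add_Var show ?case
    using keys_mult[of "delta_mon a" "delta_Var i"]
    by (fastforce simp: delta_mon_add_Var add.assoc add.commute add.left_commute)
qed

lemma keys_delta_mon_left: "(u, w) \<in> keys (delta_mon a) \<Longrightarrow> keys u \<subseteq> keys a"
  and keys_delta_mon_right: "(u, w) \<in> keys (delta_mon a) \<Longrightarrow> keys w \<subseteq> keys a"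
  using keys_delta_mon[of u w a] by (auto simp: in_keys_iff lookup_add)

locale complex_module = module scale for scale :: "complex \<Rightarrow> 'b::ab_group_add \<Rightarrow> 'b" (infixr \<open>*s\<close> 75)
begin

lemma lincomb_add_fun_prod:
  "lincomb scale (\<lambda>(u, w). g1 u w + g2 u w) T = lincomb scale (\<lambda>(u, w). g1 u w) T + lincomb scale (\<lambda>(u, w). g2 u w) T"
  using lincomb_add_fun[of "\<lambda>(u, w). g1 u w" "\<lambda>(u, w). g2 u w" T] by (simp add: split_def)

lemma lincomb_sum_fun_prod:
  "lincomb scale (\<lambda>(u, w). \<Sum>j\<in>J. g j u w) T = (\<Sum>j\<in>J. lincomb scale (\<lambda>(u, w). g j u w) T)"
  using lincomb_sum_fun[of "\<lambda>j (u, w). g j u w" J T] by (simp add: split_def)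

lemma lincomb_delta_mon_zero: "lincomb scale g (delta_mon 0) = g (0, 0)"
  by (simp add: delta_mon_zero flip: single_one zero_prod_def)

lemma lincomb_delta_mon_add_Var:
  "lincomb scale g (delta_mon (a + Var i))
    = lincomb scale (\<lambda>(u, w). g (u + Var i, w)) (delta_mon a) + lincomb scale (\<lambda>(u, w). g (u, w + Var i)) (delta_mon a)"
proof -
  have shift: "k + (u, w) = (fst k + u, snd k + w)" for k :: "mon \<times> mon" and u w
    by (cases k) simp
  show ?thesis
    by (simp add: delta_mon_add_Var delta_Var_def distrib_left lincomb_add lincomb_mult_single split_def shift)
qed

lemma lincomb_delta_mon_Var: "lincomb scale g (delta_mon (Var i)) = g (Var i, 0) + g (0, Var i)"
  using lincomb_delta_mon_add_Var[of g 0 i] by (simp add: lincomb_delta_mon_zero)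

lemma lincomb_delta_mon_swap:
  "lincomb scale (\<lambda>(u, w). g u w) (delta_mon a) = lincomb scale (\<lambda>(u, w). g w u) (delta_mon a)"
proof (induction a arbitrary: g rule: mon_induct)
  case zero
  then show ?case by (simp add: lincomb_delta_mon_zero)
next
  case (add_Var a i)
  from add_Var[of "\<lambda>u w. g (u + Var i) w"] add_Var[of "\<lambda>u w. g u (w + Var i)"] show ?case
    by (simp add: lincomb_delta_mon_add_Var add.commute)
qed

lemma lincomb_delta_mon_counit_right:
  "lincomb scale (\<lambda>(u, w). if w = 0 then f u else 0) (delta_mon a) = f a"
proof (induction a arbitrary: f rule: mon_induct)
  case zero
  then show ?case by (simp add: lincomb_delta_mon_zero)
next
  case (add_Var a i)
  from add_Var[of "\<lambda>u. f (u + Var i)"] show ?case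
    by (simp add: lincomb_delta_mon_add_Var mon_add_eq_zero_iff)
qed

lemma lincomb_delta_mon_counit_left:
  "lincomb scale (\<lambda>(u, w). if u = 0 then f w else 0) (delta_mon a) = f a"
  using lincomb_delta_mon_counit_right[of f a] lincomb_delta_mon_swap[of "\<lambda>u w. if w = 0 then f u else 0" a]
  by simp

text \<open>Leibniz rule for \<open>\<partial>\<^sub>n (x\<^sub>i x\<^sup>u)\<close>, in the form of a shift of the exponent \<open>u\<close>.\<close>

lemma scale_lookup_add_Var:
  "of_nat (lookup (u + Var i) n) *s h (u + Var i - Var n)
    = of_nat (lookup u n) *s h (u - Var n + Var i) + (if i = n then h u else 0)"
proof (cases "i = n")
  case True
  then show ?thesis
    by (cases "lookup u n = 0")
      (simp_all add: lookup_add lookup_Var add_Var_minus_Var minus_Var_add_Var scale_left_distrib)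
next
  case False
  then show ?thesis
    by (simp add: lookup_add lookup_Var add_Var_minus_Var_commute)
qed

text \<open>The coproduct commutes with partial derivatives: \<open>(\<partial>\<^sub>n \<otimes> id) \<circ> \<Delta> = \<Delta> \<circ> \<partial>\<^sub>n\<close>.\<close>

lemma lincomb_delta_mon_pderiv_left:
  "lincomb scale (\<lambda>(u, w). of_nat (lookup u n) *s f (u - Var n) w) (delta_mon a)
    = of_nat (lookup a n) *s lincomb scale (\<lambda>(u, w). f u w) (delta_mon (a - Var n))"
proof (induction a arbitrary: f rule: mon_induct)
  case zero
  then show ?case by (simp add: lincomb_delta_mon_zero)
next
  case (add_Var a i)
  let ?F = "\<lambda>c. lincomb scale (\<lambda>(u, w). f u w) (delta_mon c)"
  let ?X = "lincomb scale (\<lambda>(u, w). of_nat (lookup u n) *s f (u - Var n + Var i) w) (delta_mon a)"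
  let ?Y = "lincomb scale (\<lambda>(u, w). of_nat (lookup u n) *s f (u - Var n) (w + Var i)) (delta_mon a)"
  have "lincomb scale (\<lambda>(u, w). of_nat (lookup u n) *s f (u - Var n) w) (delta_mon (a + Var i))
      = lincomb scale (\<lambda>(u, w). of_nat (lookup (u + Var i) n) *s f (u + Var i - Var n) w) (delta_mon a) + ?Y"
    by (simp add: lincomb_delta_mon_add_Var)
  also have "lincomb scale (\<lambda>(u, w). of_nat (lookup (u + Var i) n) *s f (u + Var i - Var n) w) (delta_mon a)
      = ?X + (if i = n then ?F a else 0)"
    using scale_lookup_add_Var[of _ i n "\<lambda>u. f u _"]
    by (simp add: lincomb_add_fun[symmetric] split_def)
  also have "?X + (if i = n then ?F a else 0) + ?Y = (?X + ?Y) + (if i = n then ?F a else 0)"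
    by (simp only: add.assoc add.commute[of "if i = n then ?F a else 0"])
  also have "?X + ?Y = of_nat (lookup a n) *s ?F (a - Var n + Var i)"
    using add_Var[of "\<lambda>u w. f (u + Var i) w"] add_Var[of "\<lambda>u w. f u (w + Var i)"]
    by (simp add: lincomb_delta_mon_add_Var scale_right_distrib)
  also have "\<dots> + (if i = n then ?F a else 0) = of_nat (lookup (a + Var i) n) *s ?F (a + Var i - Var n)"
    by (rule scale_lookup_add_Var[symmetric])
  finally show ?case .
qed

lemma lincomb_delta_mon_pderiv_right:
  "lincomb scale (\<lambda>(u, w). of_nat (lookup w n) *s f u (w - Var n)) (delta_mon a)
    = of_nat (lookup a n) *s lincomb scale (\<lambda>(u, w). f u w) (delta_mon (a - Var n))"
  using lincomb_delta_mon_pderiv_left[of n "\<lambda>u w. f w u" a]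
  by (simp add: lincomb_delta_mon_swap[of "\<lambda>u w. of_nat (lookup u n) *s f w (u - Var n)"]
      lincomb_delta_mon_swap[of "\<lambda>u w. f w u"])

lemma lincomb_delta_mon_Var_left:
  "lincomb scale (\<lambda>(u, w). if u = Var n then f w else 0) (delta_mon a)
    = of_nat (lookup a n) *s f (a - Var n)"
proof -
  have "(if u = Var n then f w else 0) = of_nat (lookup u n) *s (if u - Var n = 0 then f w else 0)" for u w
  proof (cases "lookup u n = 0")
    case False
    then have "u - Var n = 0 \<longleftrightarrow> u = Var n"
      using minus_Var_add_Var[of u n] by (auto simp: add_Var_minus_Var)
    then show ?thesis by (auto simp: lookup_Var)
  qed (auto simp: lookup_Var)
  then show ?thesis
    using lincomb_delta_mon_pderiv_left[of n "\<lambda>u w. if u = 0 then f w else 0" a]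
    by (simp add: lincomb_delta_mon_counit_left)
qed

lemma lincomb_delta_mon_Var_right:
  "lincomb scale (\<lambda>(u, w). if w = Var n then f u else 0) (delta_mon a)
    = of_nat (lookup a n) *s f (a - Var n)"
  using lincomb_delta_mon_Var_left[of n f a] lincomb_delta_mon_swap[of "\<lambda>u w. if u = Var n then f w else 0" a]
  by simp

end

lemma sum_lookup_superset:
  assumes "finite N" "keys b \<subseteq> N"
  shows "(\<Sum>n\<in>keys b. of_nat (lookup b n) * g n) = (\<Sum>n\<in>N. of_nat (lookup b n) * (g n :: 'a::semiring_1))"
  by (rule sum.mono_neutral_left) (use assms in \<open>auto simp: in_keys_iff\<close>)

section \<open>A bicharacter on monomials\<close>

locale bichar =
  fixes iota :: "complex \<Rightarrow> 'a::comm_ring_1" and r :: "T2 \<Rightarrow> 'a"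
  assumes calg_hom: "calg_hom iota" and bicharacter: "bicharacter iota r"
begin

lemmas iota_add = calg_hom_simps(1)[OF calg_hom]
  and iota_mult = calg_hom_simps(2)[OF calg_hom]
  and iota_one [simp] = calg_hom_simps(3)[OF calg_hom]
  and iota_zero [simp] = calg_hom_simps(4)[OF calg_hom]
  and iota_of_nat [simp] = calg_hom_simps(5)[OF calg_hom]

sublocale A: complex_module "\<lambda>c x. iota c * x"
  by standard (simp_all add: iota_add iota_mult algebra_simps)

sublocale K: complex_module "\<lambda>c F. smultA (iota c) F"
  by standard (simp_all add: iota_add iota_mult smultA.scale_right_distrib smultA.scale_left_distrib)

declare A.scale_scale [simp del] K.scale_scale [simp del] \<comment> \<open>they loop with \<open>iota_mult\<close> and \<open>mult.assoc\<close>\<close>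

abbreviation lincombA :: "('k \<Rightarrow> 'a) \<Rightarrow> ('k \<Rightarrow>\<^sub>0 complex) \<Rightarrow> 'a" where
  "lincombA \<equiv> lincomb (\<lambda>c x. iota c * x)"

abbreviation lincombK :: "('k \<Rightarrow> mon \<Rightarrow>\<^sub>0 'a) \<Rightarrow> ('k \<Rightarrow>\<^sub>0 complex) \<Rightarrow> mon \<Rightarrow>\<^sub>0 'a" where
  "lincombK \<equiv> lincomb (\<lambda>c F. smultA (iota c) F)"

lemma lincombA_mult_left: "lincombA (\<lambda>k. c * g k) T = c * lincombA g T"
  by (rule A.module_hom_lincomb[symmetric]) (auto simp: module_hom_iff A.module_axioms distrib_left mult.left_commute)

lemma lincombA_sum_mult:
  "lincombA (\<lambda>(u, w). \<Sum>n\<in>J. c n * h n u w) T = (\<Sum>n\<in>J. c n * lincombA (\<lambda>(u, w). h n u w) T)"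
  using A.lincomb_sum_fun[of "\<lambda>n k. c n * (case k of (u, w) \<Rightarrow> h n u w)" J T]
  by (simp add: split_def lincombA_mult_left)

lemma lincombA_delta_mon_pderiv_left:
  "lincombA (\<lambda>(u, w). of_nat (lookup u n) * f (u - Var n) w) (delta_mon a)
    = of_nat (lookup a n) * lincombA (\<lambda>(u, w). f u w) (delta_mon (a - Var n))"
  using A.lincomb_delta_mon_pderiv_left[of n f a] by simp

lemma lincombA_delta_mon_pderiv_right:
  "lincombA (\<lambda>(u, w). of_nat (lookup w n) * f u (w - Var n)) (delta_mon a)
    = of_nat (lookup a n) * lincombA (\<lambda>(u, w). f u w) (delta_mon (a - Var n))"
  using A.lincomb_delta_mon_pderiv_right[of n f a] by simp

lemma sw2_eq_lincombA: "sw2 iota f T = lincombA (\<lambda>(u, v). f (mono u) (mono v)) T"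
  by (simp add: sw2_def lincomb_def split_def)

definition R :: "mon \<Rightarrow> mon \<Rightarrow> 'a" where
  "R a b = r (tensor (mono a) (mono b))"

definition q :: "nat \<Rightarrow> nat \<Rightarrow> 'a" where
  "q i n = R (Var i) (Var n)"

definition qsym :: "nat \<Rightarrow> nat \<Rightarrow> 'a" where
  "qsym i n = q i n + q n i"

lemma R_zero_left: "R 0 b = (if b = 0 then 1 else 0)"
  and R_zero_right: "R a 0 = (if a = 0 then 1 else 0)"
  using bicharacter by (simp_all add: bicharacter_def R_def mono_zero counit_def lookup_mono)

lemma R_add_Var_left_coprod: "R (a + Var i) b = lincombA (\<lambda>(c1, c2). R (Var i) c1 * R a c2) (delta_mon b)"
  using bicharacter
  by (simp add: bicharacter_def R_def sw2_eq_lincombA delta_mono xv_def flip: xv_mult_mono)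

lemma R_add_Var_right_coprod: "R b (a + Var i) = lincombA (\<lambda>(c1, c2). R c1 (Var i) * R c2 a) (delta_mon b)"
  using bicharacter
  by (simp add: bicharacter_def R_def sw2_eq_lincombA delta_mono xv_def flip: xv_mult_mono)

text \<open>Write \<open>x\<^sup>c = x\<^sup>c\<^sup>' x\<^sub>j\<close> with \<open>c' \<noteq> 0\<close> and expand with the primitive coproduct of \<open>x\<^sub>i\<close>.\<close>

lemma R_Var_not_Var:
  assumes "\<And>n. c \<noteq> Var n"
  shows "R (Var i) c = 0 \<and> R c (Var i) = 0"
proof (cases "c = 0")
  case True
  then show ?thesis by (simp add: R_zero_left R_zero_right)
next
  case False
  then obtain j where "j \<in> keys c"
    by (metis keys_eq_empty ex_in_conv)
  then have c: "c = (c - Var j) + Var j"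
    by (simp add: minus_Var_add_Var in_keys_iff)
  with assms have "c - Var j \<noteq> 0"
    by (metis add_0)
  then show ?thesis
    by (subst (1 2) c) (simp add: R_add_Var_left_coprod R_add_Var_right_coprod
        A.lincomb_delta_mon_Var R_zero_left R_zero_right)
qed

lemma R_Var_eq_sum:
  assumes "finite N" "keys c \<subseteq> N"
  shows "R (Var i) c = (\<Sum>n\<in>N. if c = Var n then q i n else 0)"
    and "R c (Var i) = (\<Sum>n\<in>N. if c = Var n then q n i else 0)"
proof -
  have "R (Var i) c = (\<Sum>n\<in>N. if c = Var n then q i n else 0) \<and>
        R c (Var i) = (\<Sum>n\<in>N. if c = Var n then q n i else 0)"
  proof (cases "\<exists>m. c = Var m")
    case True
    then obtain m where "c = Var m" by blast
    with assms show ?thesis by (simp add: q_def sum.delta')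
  qed (use R_Var_not_Var in auto)
  then show "R (Var i) c = (\<Sum>n\<in>N. if c = Var n then q i n else 0)"
    and "R c (Var i) = (\<Sum>n\<in>N. if c = Var n then q n i else 0)"
    by simp_all
qed

text \<open>The bicharacter property turns multiplication by \<open>x\<^sub>i\<close> in one argument of \<open>r\<close> into the
  derivation \<open>\<Sum>\<^sub>n q\<^sub>i\<^sub>n \<partial>\<^sub>n\<close> (resp. \<open>\<Sum>\<^sub>n q\<^sub>n\<^sub>i \<partial>\<^sub>n\<close>) in the other one.\<close>

lemma R_add_Var_left:
  assumes "finite N" "keys b \<subseteq> N"
  shows "R (a + Var i) b = (\<Sum>n\<in>N. of_nat (lookup b n) * (q i n * R a (b - Var n)))"
proof -
  have "R (a + Var i) b = lincombA (\<lambda>(c1, c2). \<Sum>n\<in>N. if c1 = Var n then q i n * R a c2 else 0) (delta_mon b)"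
    unfolding R_add_Var_left_coprod
  proof (rule A.lincomb_cong, clarify)
    fix c1 c2
    assume "(c1, c2) \<in> keys (delta_mon b)"
    with assms have "keys c1 \<subseteq> N"
      using keys_delta_mon_left by blast
    with assms(1) show "R (Var i) c1 * R a c2 = (\<Sum>n\<in>N. if c1 = Var n then q i n * R a c2 else 0)"
      by (auto simp: R_Var_eq_sum sum_distrib_right intro!: sum.cong)
  qed
  also have "\<dots> = (\<Sum>n\<in>N. lincombA (\<lambda>(c1, c2). if c1 = Var n then q i n * R a c2 else 0) (delta_mon b))"
    by (subst A.lincomb_sum_fun[symmetric]) (simp add: split_def)
  also have "\<dots> = (\<Sum>n\<in>N. of_nat (lookup b n) * (q i n * R a (b - Var n)))"
    by (simp add: A.lincomb_delta_mon_Var_left)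
  finally show ?thesis .
qed

lemma R_add_Var_right:
  assumes "finite N" "keys b \<subseteq> N"
  shows "R b (a + Var i) = (\<Sum>n\<in>N. of_nat (lookup b n) * (q n i * R (b - Var n) a))"
proof -
  have "R b (a + Var i) = lincombA (\<lambda>(c1, c2). \<Sum>n\<in>N. if c1 = Var n then q n i * R c2 a else 0) (delta_mon b)"
    unfolding R_add_Var_right_coprod
  proof (rule A.lincomb_cong, clarify)
    fix c1 c2
    assume "(c1, c2) \<in> keys (delta_mon b)"
    with assms have "keys c1 \<subseteq> N"
      using keys_delta_mon_left by blast
    with assms(1) show "R c1 (Var i) * R c2 a = (\<Sum>n\<in>N. if c1 = Var n then q n i * R c2 a else 0)"
      by (auto simp: R_Var_eq_sum sum_distrib_right intro!: sum.cong)
  qed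
  also have "\<dots> = (\<Sum>n\<in>N. lincombA (\<lambda>(c1, c2). if c1 = Var n then q n i * R c2 a else 0) (delta_mon b))"
    by (subst A.lincomb_sum_fun[symmetric]) (simp add: split_def)
  also have "\<dots> = (\<Sum>n\<in>N. of_nat (lookup b n) * (q n i * R (b - Var n) a))"
    by (simp add: A.lincomb_delta_mon_Var_left)
  finally show ?thesis .
qed

lemma lincombA_R_add_Var_left:
  "lincombA (\<lambda>(b1, b2). R (a + Var i) b1 * g b2) (delta_mon b)
    = (\<Sum>n\<in>keys b. of_nat (lookup b n) * (q i n * lincombA (\<lambda>(b1, b2). R a b1 * g b2) (delta_mon (b - Var n))))"
proof -
  have "lincombA (\<lambda>(b1, b2). R (a + Var i) b1 * g b2) (delta_mon b)
      = lincombA (\<lambda>(b1, b2). \<Sum>n\<in>keys b. q i n * (of_nat (lookup b1 n) * (R a (b1 - Var n) * g b2))) (delta_mon b)"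
    by (rule A.lincomb_cong)
      (auto simp: R_add_Var_left[OF _ keys_delta_mon_left] sum_distrib_left sum_distrib_right mult_ac intro!: sum.cong)
  also have "\<dots> = (\<Sum>n\<in>keys b. q i n * lincombA (\<lambda>(b1, b2). of_nat (lookup b1 n) * (R a (b1 - Var n) * g b2)) (delta_mon b))"
    by (rule lincombA_sum_mult)
  also have "\<dots> = (\<Sum>n\<in>keys b. q i n * (of_nat (lookup b n) * lincombA (\<lambda>(b1, b2). R a b1 * g b2) (delta_mon (b - Var n))))"
    by (simp only: lincombA_delta_mon_pderiv_left[where f="\<lambda>u w. R a u * g w"])
  finally show ?thesis
    by (simp add: mult.left_commute)
qed

lemma lincombA_R_add_Var_right:
  "lincombA (\<lambda>(b1, b2). g b1 * R b2 (a + Var i)) (delta_mon b)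
    = (\<Sum>n\<in>keys b. of_nat (lookup b n) * (q n i * lincombA (\<lambda>(b1, b2). g b1 * R b2 a) (delta_mon (b - Var n))))"
proof -
  have "lincombA (\<lambda>(b1, b2). g b1 * R b2 (a + Var i)) (delta_mon b)
      = lincombA (\<lambda>(b1, b2). \<Sum>n\<in>keys b. q n i * (of_nat (lookup b2 n) * (g b1 * R (b2 - Var n) a))) (delta_mon b)"
    by (rule A.lincomb_cong)
      (auto simp: R_add_Var_right[OF _ keys_delta_mon_right] sum_distrib_left mult_ac intro!: sum.cong)
  also have "\<dots> = (\<Sum>n\<in>keys b. q n i * lincombA (\<lambda>(b1, b2). of_nat (lookup b2 n) * (g b1 * R (b2 - Var n) a)) (delta_mon b))"
    by (rule lincombA_sum_mult)
  also have "\<dots> = (\<Sum>n\<in>keys b. q n i * (of_nat (lookup b n) * lincombA (\<lambda>(b1, b2). g b1 * R b2 a) (delta_mon (b - Var n))))"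
    by (simp only: lincombA_delta_mon_pderiv_right[where f="\<lambda>u w. g u * R w a"])
  finally show ?thesis
    by (simp add: mult.left_commute)
qed

definition S :: "mon \<Rightarrow> mon \<Rightarrow> 'a" where
  "S a b = symmetrization iota r (tensor (mono a) (mono b))"

lemma S_eq_lincombA:
  "S a b = lincombA (\<lambda>(a1, a2). lincombA (\<lambda>(b1, b2). R a1 b1 * R b2 a2) (delta_mon b)) (delta_mon a)"
proof -
  have "lin_ext iota f T = lincombA (\<lambda>(m, n). f m n) T" for f and T :: T2
    by (simp add: lin_ext_def lincomb_def split_def)
  then show ?thesis
    by (simp add: S_def symmetrization_def conv_def transp_def tensor_mono sw2_eq_lincombA delta_mono R_def)
qed

lemma S_zero_left: "S 0 b = (if b = 0 then 1 else 0)"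
proof -
  have "S 0 b = lincombA (\<lambda>(b1, b2). if b1 = 0 then R b2 0 else 0) (delta_mon b)"
    unfolding S_eq_lincombA A.lincomb_delta_mon_zero case_prod_conv
    by (rule A.lincomb_cong) (auto simp: R_zero_left)
  also have "\<dots> = R b 0"
    by (rule A.lincomb_delta_mon_counit_left)
  finally show ?thesis
    by (simp add: R_zero_right)
qed

lemma S_add_Var: "S (a + Var i) b = (\<Sum>n\<in>keys b. of_nat (lookup b n) * (qsym i n * S a (b - Var n)))"
proof -
  have "S (a + Var i) b = lincombA (\<lambda>(a1, a2). \<Sum>n\<in>keys b. of_nat (lookup b n) * (qsym i n *
      lincombA (\<lambda>(b1, b2). R a1 b1 * R b2 a2) (delta_mon (b - Var n)))) (delta_mon a)"
    unfolding S_eq_lincombA A.lincomb_delta_mon_add_Var A.lincomb_add_fun[symmetric]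
    by (rule A.lincomb_cong)
      (auto simp: lincombA_R_add_Var_left[where g="\<lambda>b2. R b2 _"] lincombA_R_add_Var_right
        qsym_def distrib_left distrib_right sum.distrib)
  also have "\<dots> = (\<Sum>n\<in>keys b. of_nat (lookup b n) * (qsym i n * S a (b - Var n)))"
    by (simp only: lincombA_sum_mult) (simp add: S_eq_lincombA split_def lincombA_mult_left)
  finally show ?thesis .
qed

lemma S_Var_eq_sum:
  assumes "finite N" "keys c \<subseteq> N"
  shows "S (Var i) c = (\<Sum>n\<in>N. if c = Var n then qsym i n else 0)"
proof -
  have "of_nat (lookup c n) * (qsym i n * S 0 (c - Var n)) = (if c = Var n then qsym i n else 0)" for n
  proof (cases "lookup c n = 0")
    case False
    then have "c - Var n = 0 \<longleftrightarrow> c = Var n"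
      using minus_Var_add_Var[of c n] by (auto simp: add_Var_minus_Var)
    then show ?thesis by (auto simp: S_zero_left lookup_Var)
  qed (auto simp: lookup_Var)
  then show ?thesis
    using S_add_Var[of 0 i c] sum_lookup_superset[OF assms, of "\<lambda>n. qsym i n * S 0 (c - Var n)"]
    by simp
qed

definition rho :: "mon \<Rightarrow> 'a" where
  "rho u = lincombA (\<lambda>(u1, u2). R u1 u2) (delta_mon u)"

lemma rho_zero: "rho 0 = 1"
  by (simp add: rho_def A.lincomb_delta_mon_zero R_zero_left)

lemma rho_add_Var: "rho (u + Var i) = (\<Sum>n\<in>keys u. of_nat (lookup u n) * (qsym i n * rho (u - Var n)))"
proof -
  have "lincombA (\<lambda>(a, b). R (a + Var i) b) (delta_mon u)
      = lincombA (\<lambda>(a, b). \<Sum>n\<in>keys u. q i n * (of_nat (lookup b n) * R a (b - Var n))) (delta_mon u)"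
    by (rule A.lincomb_cong)
      (auto simp: R_add_Var_left[OF _ keys_delta_mon_right] mult_ac intro!: sum.cong)
  also have "\<dots> = (\<Sum>n\<in>keys u. q i n * (of_nat (lookup u n) * rho (u - Var n)))"
    by (simp only: lincombA_sum_mult lincombA_delta_mon_pderiv_right[where f=R] rho_def)
  finally have left: "lincombA (\<lambda>(a, b). R (a + Var i) b) (delta_mon u)
      = (\<Sum>n\<in>keys u. q i n * (of_nat (lookup u n) * rho (u - Var n)))" .
  have "lincombA (\<lambda>(a, b). R a (b + Var i)) (delta_mon u)
      = lincombA (\<lambda>(a, b). \<Sum>n\<in>keys u. q n i * (of_nat (lookup a n) * R (a - Var n) b)) (delta_mon u)"
    by (rule A.lincomb_cong)
      (auto simp: R_add_Var_right[OF _ keys_delta_mon_left] mult_ac intro!: sum.cong)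
  also have "\<dots> = (\<Sum>n\<in>keys u. q n i * (of_nat (lookup u n) * rho (u - Var n)))"
    by (simp only: lincombA_sum_mult lincombA_delta_mon_pderiv_left[where f=R] rho_def)
  finally have right: "lincombA (\<lambda>(a, b). R a (b + Var i)) (delta_mon u)
      = (\<Sum>n\<in>keys u. q n i * (of_nat (lookup u n) * rho (u - Var n)))" .
  show ?thesis
    unfolding rho_def[of "u + Var i"] A.lincomb_delta_mon_add_Var
    by (simp add: left right qsym_def distrib_left distrib_right sum.distrib mult_ac)
qed

end

abbreviation monoA :: "mon \<Rightarrow> mon \<Rightarrow>\<^sub>0 'a::comm_ring_1" where
  "monoA a \<equiv> single a 1"

abbreviation X :: "nat \<Rightarrow> mon \<Rightarrow>\<^sub>0 'a::comm_ring_1" where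
  "X i \<equiv> monoA (Var i)"

abbreviation A_linear :: "((mon \<Rightarrow>\<^sub>0 'a::comm_ring_1) \<Rightarrow> (mon \<Rightarrow>\<^sub>0 'a)) \<Rightarrow> bool" where
  "A_linear \<equiv> module_hom smultA smultA"

lemma A_linearI:
  assumes "\<And>F G. \<Phi> (F + G) = \<Phi> F + \<Phi> G" "\<And>c F. \<Phi> (smultA c F) = smultA c (\<Phi> F)"
  shows "A_linear \<Phi>"
  using assms by (simp add: module_hom_iff smultA.module_axioms)

lemma A_linear_eqI:
  assumes "A_linear \<Phi>" "A_linear \<Psi>" "\<And>a. \<Phi> (monoA a) = \<Psi> (monoA a)"
  shows "\<Phi> F = \<Psi> F"
proof -
  have F: "F = (\<Sum>a\<in>keys F. smultA (lookup F a) (monoA a))"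
    by (subst poly_mapping_eq_sum_single) simp
  have "\<Phi> F = (\<Sum>a\<in>keys F. smultA (lookup F a) (\<Phi> (monoA a)))"
    by (subst F) (simp only: module_hom.sum[OF assms(1)] module_hom.scale[OF assms(1)])
  also have "\<dots> = (\<Sum>a\<in>keys F. smultA (lookup F a) (\<Psi> (monoA a)))"
    by (simp only: assms(3))
  also have "\<dots> = \<Psi> F"
    by (subst (2) F) (simp only: module_hom.sum[OF assms(2)] module_hom.scale[OF assms(2)])
  finally show ?thesis .
qed

lemma A_bilinear_eqI:
  assumes "\<And>G. A_linear (\<lambda>F. \<Phi> F G)" "\<And>G. A_linear (\<lambda>F. \<Psi> F G)"
    and "\<And>F. A_linear (\<Phi> F)" "\<And>F. A_linear (\<Psi> F)"
    and "\<And>a b. \<Phi> (monoA a) (monoA b) = \<Psi> (monoA a) (monoA b)"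
  shows "\<Phi> F G = \<Psi> F G"
proof -
  have "\<Phi> (monoA a) G = \<Psi> (monoA a) G" for a
    by (rule A_linear_eqI[OF assms(3,4,5)])
  then show ?thesis
    by (rule A_linear_eqI[OF assms(1,2)])
qed

lemma X_mult_monoA: "X i * monoA a = monoA (a + Var i)"
  by (simp add: mult_single add.commute)

lemma A_linear_X_mult: "A_linear (\<lambda>F. X i * F)"
  by (rule A_linearI) (simp_all add: distrib_left smultA_mult(2))

lemma lookup_X_mult: "lookup (X i * F) b = (if lookup b i = 0 then 0 else lookup F (b - Var i))"
proof -
  have "X i * F = (\<Sum>a\<in>keys F. single (Var i + a) (lookup F a))"
    by (subst poly_mapping_eq_sum_single[of F]) (simp add: sum_distrib_left mult_single)
  then have "lookup (X i * F) b = (\<Sum>a\<in>keys F. (lookup F a when Var i + a = b))"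
    by (simp add: lookup_sum lookup_single)
  also have "\<dots> = (\<Sum>a\<in>keys F. ((if lookup b i = 0 then 0 else lookup F a) when a = b - Var i))"
  proof (rule sum.cong)
    fix a
    have "Var i + a = b \<longleftrightarrow> lookup b i \<noteq> 0 \<and> a = b - Var i"
      using add_Var_minus_Var[of a i] minus_Var_add_Var[of b i]
      by (auto simp: add.commute lookup_add lookup_Var)
    then show "(lookup F a when Var i + a = b) = ((if lookup b i = 0 then 0 else lookup F a) when a = b - Var i)"
      by (auto simp: when_def)
  qed simp
  also have "\<dots> = (if lookup b i = 0 then 0 else lookup F (b - Var i))"
    by (simp add: when_def sum.delta' in_keys_iff)
  finally show ?thesis .
qed

lemma lookup_pderivA: "lookup (pderivA i F) b = of_nat (lookup b i + 1) * lookup F (b + Var i)"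
proof -
  have "lookup (pderivA i F) b = (\<Sum>a\<in>keys F. (of_nat (lookup a i) * lookup F a when a - Var i = b))"
    by (simp add: pderivA_def lookup_sum lookup_single)
  also have "\<dots> = (\<Sum>a\<in>keys F. (of_nat (lookup b i + 1) * lookup F a when a = b + Var i))"
  proof (rule sum.cong)
    fix a
    show "(of_nat (lookup a i) * lookup F a when a - Var i = b) = (of_nat (lookup b i + 1) * lookup F a when a = b + Var i)"
    proof (cases "a = b + Var i")
      case False
      then have "a - Var i = b \<Longrightarrow> lookup a i = 0"
        using minus_Var_add_Var[of a i] by auto
      with False show ?thesis by (auto simp: when_def)
    qed (simp add: add_Var_minus_Var lookup_add lookup_Var)
  qed simp
  also have "\<dots> = of_nat (lookup b i + 1) * lookup F (b + Var i)"
    by (simp add: when_def sum.delta' in_keys_iff)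
  finally show ?thesis .
qed

lemma pderivA_add: "pderivA i (F + G) = pderivA i F + pderivA i G"
  by (rule poly_mapping_eqI) (simp add: lookup_pderivA lookup_add algebra_simps)

lemma pderivA_smultA: "pderivA i (smultA c F) = smultA c (pderivA i F)"
  by (rule poly_mapping_eqI) (simp add: lookup_pderivA algebra_simps)

lemma A_linear_pderivA: "A_linear (pderivA i)"
  by (rule A_linearI) (simp_all add: pderivA_add pderivA_smultA)

lemmas pderivA_zero [simp] = module_hom.zero[OF A_linear_pderivA]

lemma pderivA_monoA: "pderivA n (monoA a) = smultA (of_nat (lookup a n)) (monoA (a - Var n))"
  by (simp add: pderivA_def)

lemma pderivA_commute: "pderivA m (pderivA n F) = pderivA n (pderivA m F)"
  by (rule poly_mapping_eqI) (simp add: lookup_pderivA lookup_add lookup_Var algebra_simps)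

lemma pderivA_X_mult: "pderivA n (X i * F) = X i * pderivA n F + (if n = i then F else 0)"
proof (rule poly_mapping_eqI)
  fix b
  show "lookup (pderivA n (X i * F)) b = lookup (X i * pderivA n F + (if n = i then F else 0)) b"
  proof (cases "n = i")
    case True
    then show ?thesis
      by (cases "lookup b i = 0") (simp_all add: lookup_add lookup_X_mult lookup_pderivA lookup_Var
          lookup_minus add_Var_minus_Var minus_Var_add_Var ring_distribs)
  next
    case False
    then show ?thesis
      by (auto simp: lookup_add lookup_X_mult lookup_pderivA lookup_Var add_Var_minus_Var_commute lookup_minus)
  qed
qed

definition vars :: "(mon \<Rightarrow>\<^sub>0 'a::zero) \<Rightarrow> nat set" where
  "vars F = (\<Union>a\<in>keys F. keys a)"

lemma finite_vars [simp]: "finite (vars F)"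
  by (simp add: vars_def)

lemma vars_monoA [simp]: "vars (monoA a :: mon \<Rightarrow>\<^sub>0 'a::comm_ring_1) = keys a"
  by (simp add: vars_def)

lemma pderivA_eq_zero:
  assumes "n \<notin> vars F"
  shows "pderivA n F = 0"
proof (rule poly_mapping_eqI)
  fix b
  have "n \<in> keys (b + Var n)"
    by (simp add: in_keys_iff lookup_add lookup_Var)
  with assms have "b + Var n \<notin> keys F"
    by (auto simp: vars_def)
  then show "lookup (pderivA n F) b = lookup 0 b"
    by (simp add: lookup_pderivA in_keys_iff)
qed

lemma vars_pderivA: "vars (pderivA n F) \<subseteq> vars F"
proof
  fix j
  assume "j \<in> vars (pderivA n F)"
  then obtain b where "b \<in> keys (pderivA n F)" "j \<in> keys b"
    by (auto simp: vars_def)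
  then have "b + Var n \<in> keys F" "j \<in> keys (b + Var n)"
    by (auto simp: in_keys_iff lookup_pderivA lookup_add)
  then show "j \<in> vars F"
    by (auto simp: vars_def)
qed

lemma vars_add: "vars (F + G) \<subseteq> vars F \<union> vars G"
  unfolding vars_def using keys_add[of F G] by auto

lemma vars_smultA: "vars (smultA c F) \<subseteq> vars F"
  unfolding vars_def using keys_smultA[of c F] by auto

lemma vars_sum: "vars (\<Sum>j\<in>J. F j) \<subseteq> (\<Union>j\<in>J. vars (F j))"
proof (induction J rule: infinite_finite_induct)
  case (insert x J)
  then show ?case using vars_add[of "F x" "sum F J"] by auto
qed (auto simp: vars_def)

lemma vars_X_mult: "vars (X i * F) \<subseteq> insert i (vars F)"
proof
  fix j
  assume "j \<in> vars (X i * F)"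
  then obtain b where b: "b \<in> keys (X i * F)" "j \<in> keys b"
    by (auto simp: vars_def)
  then have "b - Var i \<in> keys F"
    by (auto simp: in_keys_iff lookup_X_mult split: if_splits)
  moreover have "j = i \<or> j \<in> keys (b - Var i)"
    using b(2) by (auto simp: in_keys_iff lookup_minus lookup_Var)
  ultimately show "j \<in> insert i (vars F)"
    by (auto simp: vars_def)
qed

definition deg_less :: "nat \<Rightarrow> (mon \<Rightarrow>\<^sub>0 'a::zero) \<Rightarrow> bool" where
  "deg_less d F \<longleftrightarrow> (\<forall>a\<in>keys F. mon_degree a < d)"

lemma deg_less_ex: "\<exists>d. deg_less d F"
  by (rule exI[of _ "Suc (Max (mon_degree ` keys F))"]) (auto simp: deg_less_def le_imp_less_Suc)

lemma deg_less_zero_iff [simp]: "deg_less 0 F \<longleftrightarrow> F = 0"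
  by (auto simp: deg_less_def)

lemma deg_less_mono: "deg_less d F \<Longrightarrow> d \<le> e \<Longrightarrow> deg_less e F"
  by (auto simp: deg_less_def)

lemma deg_less_smultA: "deg_less d F \<Longrightarrow> deg_less d (smultA c F)"
  by (auto simp: deg_less_def in_keys_iff)

lemma deg_less_sum: "(\<And>j. j \<in> J \<Longrightarrow> deg_less d (F j)) \<Longrightarrow> deg_less d (\<Sum>j\<in>J. F j)"
proof (induction J rule: infinite_finite_induct)
  case (insert x J)
  then show ?case
    using keys_add[of "F x" "sum F J"] by (auto simp: deg_less_def)
qed (auto simp: deg_less_def)

lemma deg_less_pderivA:
  assumes "deg_less (Suc d) F"
  shows "deg_less d (pderivA n F)"
  unfolding deg_less_def
proof
  fix b
  assume "b \<in> keys (pderivA n F)"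
  then have "b + Var n \<in> keys F"
    by (auto simp: in_keys_iff lookup_pderivA)
  with assms show "mon_degree b < d"
    by (auto simp: deg_less_def mon_degree_add)
qed

lemma A_linear_add: "A_linear \<Phi> \<Longrightarrow> A_linear \<Psi> \<Longrightarrow> A_linear (\<lambda>F. \<Phi> F + \<Psi> F)"
  by (simp add: module_hom_iff smultA.scale_right_distrib)

lemma A_linear_funpow: "A_linear \<Phi> \<Longrightarrow> A_linear (\<Phi> ^^ k)"
  by (induction k) (simp_all add: smultA.module_hom_id module_hom_compose)

section \<open>The operator \<open>Q\<^sub>p\<close> and its exponential\<close>

context bichar
begin

lemma r_tensor_xv: "r (tensor (xv m) (xv n)) = q m n"
  by (simp add: q_def R_def xv_def)

lemma Qp_eq_sum:
  assumes "finite V" "vars F \<subseteq> V"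
  shows "Qp r F = (\<Sum>m\<in>V. \<Sum>n\<in>V. smultA (q m n) (pderivA m (pderivA n F)))"
proof -
  have "Qp r F = (\<Sum>(m, n)\<in>V \<times> V. smultA (q m n) (pderivA m (pderivA n F)))"
    unfolding Qp_def r_tensor_xv
  proof (rule Sum_any.expand_superset)
    show "finite (V \<times> V)"
      using assms(1) by simp
    show "{k. (case k of (m, n) \<Rightarrow> smultA (q m n) (pderivA m (pderivA n F))) \<noteq> 0} \<subseteq> V \<times> V"
    proof clarify
      fix m n
      assume nz: "smultA (q m n) (pderivA m (pderivA n F)) \<noteq> 0"
      then have "n \<in> vars F"
        by (metis pderivA_eq_zero pderivA_zero smultA.scale_zero_right)
      moreover have "m \<in> vars (pderivA n F)"
        using nz by (metis pderivA_eq_zero smultA.scale_zero_right)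
      ultimately show "m \<in> V \<and> n \<in> V"
        using assms(2) vars_pderivA[of n F] by auto
    qed
  qed
  then show ?thesis
    by (simp add: sum.cartesian_product)
qed

lemma vars_Qp: "vars (Qp r F) \<subseteq> vars F"
proof -
  have "vars (Qp r F) \<subseteq> (\<Union>m\<in>vars F. \<Union>n\<in>vars F. vars (smultA (q m n) (pderivA m (pderivA n F))))"
    unfolding Qp_eq_sum[OF finite_vars order_refl] by (fastforce dest: vars_sum[THEN subsetD])
  also have "\<dots> \<subseteq> vars F"
    using vars_smultA vars_pderivA by (meson UN_least order_trans)
  finally show ?thesis .
qed

lemma A_linear_Qp: "A_linear (Qp r)"
proof (rule A_linearI)
  fix F G :: "mon \<Rightarrow>\<^sub>0 'a"
  let ?V = "vars F \<union> vars G"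
  show "Qp r (F + G) = Qp r F + Qp r G"
    using vars_add[of F G]
    by (subst (1 2 3) Qp_eq_sum[where V="?V"]) (auto simp: pderivA_add smultA.scale_right_distrib sum.distrib)
next
  fix c and F :: "mon \<Rightarrow>\<^sub>0 'a"
  show "Qp r (smultA c F) = smultA c (Qp r F)"
    using vars_smultA[of c F]
    by (subst (1 2) Qp_eq_sum[where V="vars F"])
      (auto simp: pderivA_smultA smultA.scale_sum_right mult.commute)
qed

lemmas Qp_add = module_hom.add[OF A_linear_Qp]
  and Qp_smultA = module_hom.scale[OF A_linear_Qp]
  and Qp_zero [simp] = module_hom.zero[OF A_linear_Qp]
  and Qp_pow_add = module_hom.add[OF A_linear_funpow[OF A_linear_Qp]]
  and Qp_pow_smultA = module_hom.scale[OF A_linear_funpow[OF A_linear_Qp]]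
  and Qp_pow_zero [simp] = module_hom.zero[OF A_linear_funpow[OF A_linear_Qp]]

text \<open>Each application of \<open>Q\<^sub>p\<close> lowers the degree.\<close>

lemma Qp_pow_eq_zero: "deg_less d F \<Longrightarrow> (Qp r ^^ d) F = 0"
proof (induction d arbitrary: F)
  case (Suc d)
  have "deg_less d (pderivA m (pderivA n F))" for m n
    using deg_less_pderivA[OF deg_less_mono[OF deg_less_pderivA[OF Suc.prems]]] by simp
  then have "deg_less d (Qp r F)"
    unfolding Qp_eq_sum[OF finite_vars order_refl] by (intro deg_less_sum deg_less_smultA)
  with Suc.IH show ?case
    by (simp only: funpow_Suc_right comp_apply)
qed simp

lemma Qp_pow_eq_zero_mono: "(Qp r ^^ N) F = 0 \<Longrightarrow> N \<le> M \<Longrightarrow> (Qp r ^^ M) F = 0"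
  using funpow_add[of "M - N" N "Qp r"] by (simp add: fun_eq_iff)

definition sderiv :: "nat \<Rightarrow> (mon \<Rightarrow>\<^sub>0 'a) \<Rightarrow> mon \<Rightarrow>\<^sub>0 'a" where
  "sderiv i F = (\<Sum>n\<in>vars F. smultA (qsym i n) (pderivA n F))"

lemma sderiv_eq_sum:
  assumes "finite V" "vars F \<subseteq> V"
  shows "sderiv i F = (\<Sum>n\<in>V. smultA (qsym i n) (pderivA n F))"
  unfolding sderiv_def by (rule sum.mono_neutral_left) (use assms in \<open>auto simp: pderivA_eq_zero\<close>)

lemma vars_sderiv: "vars (sderiv i F) \<subseteq> vars F"
proof -
  have "vars (sderiv i F) \<subseteq> (\<Union>n\<in>vars F. vars (smultA (qsym i n) (pderivA n F)))"
    unfolding sderiv_def by (rule vars_sum)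
  also have "\<dots> \<subseteq> vars F"
    using vars_smultA vars_pderivA by (meson UN_least order_trans)
  finally show ?thesis .
qed

lemma A_linear_sderiv: "A_linear (sderiv i)"
proof (rule A_linearI)
  fix F G :: "mon \<Rightarrow>\<^sub>0 'a"
  let ?V = "vars F \<union> vars G"
  show "sderiv i (F + G) = sderiv i F + sderiv i G"
    using vars_add[of F G]
    by (subst (1 2 3) sderiv_eq_sum[where V="?V"]) (auto simp: pderivA_add smultA.scale_right_distrib sum.distrib)
next
  fix c and F :: "mon \<Rightarrow>\<^sub>0 'a"
  show "sderiv i (smultA c F) = smultA c (sderiv i F)"
    using vars_smultA[of c F]
    by (subst (1 2) sderiv_eq_sum[where V="vars F"])
      (auto simp: pderivA_smultA smultA.scale_sum_right mult.commute)
qed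

lemmas sderiv_smultA = module_hom.scale[OF A_linear_sderiv]
  and sderiv_sum = module_hom.sum[OF A_linear_sderiv]
  and sderiv_zero [simp] = module_hom.zero[OF A_linear_sderiv]

lemma sderiv_monoA: "sderiv i (monoA a) = (\<Sum>n\<in>keys a. smultA (of_nat (lookup a n) * qsym i n) (monoA (a - Var n)))"
  by (simp add: sderiv_def pderivA_monoA mult.commute)

lemma sderiv_Qp: "sderiv i (Qp r F) = Qp r (sderiv i F)"
proof -
  let ?V = "vars F"
  have "sderiv i (Qp r F) = (\<Sum>n\<in>?V. \<Sum>m\<in>?V. \<Sum>k\<in>?V. smultA (qsym i n * q m k) (pderivA m (pderivA k (pderivA n F))))"
    using vars_Qp[of F]
    by (subst sderiv_eq_sum[where V="?V"], simp_all, subst Qp_eq_sum[where V="?V"])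
      (auto simp: module_hom.sum[OF A_linear_pderivA] pderivA_smultA smultA.scale_sum_right pderivA_commute
        intro!: sum.cong)
  also have "\<dots> = (\<Sum>m\<in>?V. \<Sum>k\<in>?V. \<Sum>n\<in>?V. smultA (q m k * qsym i n) (pderivA m (pderivA k (pderivA n F))))"
    by (subst sum.swap) (subst (2) sum.swap, simp add: mult.commute cong: sum.cong)
  also have "\<dots> = Qp r (sderiv i F)"
    using vars_sderiv[of i F]
    by (subst Qp_eq_sum[where V="?V"])
      (simp_all add: sderiv_def module_hom.sum[OF A_linear_pderivA] pderivA_smultA smultA.scale_sum_right mult.commute)
  finally show ?thesis .
qed

lemma Qp_X_mult: "Qp r (X i * F) = X i * Qp r F + sderiv i F"
proof -
  let ?V = "insert i (vars F)"
  have fin: "finite ?V" by simp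
  let ?d = "\<lambda>m n. smultA (q m n) (pderivA m (pderivA n F))"
  have "Qp r (X i * F) = (\<Sum>m\<in>?V. \<Sum>n\<in>?V. X i * ?d m n +
      ((if m = i then smultA (q i n) (pderivA n F) else 0) + (if n = i then smultA (q m i) (pderivA m F) else 0)))"
    using vars_X_mult[of i F]
    by (subst Qp_eq_sum[OF fin]) (auto simp: pderivA_X_mult pderivA_add smultA.scale_right_distrib smultA_mult(2)
        intro!: sum.cong)
  also have "\<dots> = X i * Qp r F + ((\<Sum>n\<in>?V. smultA (q i n) (pderivA n F)) + (\<Sum>m\<in>?V. smultA (q m i) (pderivA m F)))"
  proof -
    have "(\<Sum>m\<in>?V. \<Sum>n\<in>?V. if m = i then smultA (q i n) (pderivA n F) else 0)
        = (\<Sum>m\<in>?V. if m = i then \<Sum>n\<in>?V. smultA (q i n) (pderivA n F) else 0)"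
      by (rule sum.cong) auto
    moreover have "(\<Sum>m\<in>?V. \<Sum>n\<in>?V. X i * ?d m n) = X i * Qp r F"
      by (subst Qp_eq_sum[OF fin]) (auto simp: sum_distrib_left)
    ultimately show ?thesis
      using fin by (simp add: sum.distrib sum.delta)
  qed
  also have "\<dots> = X i * Qp r F + sderiv i F"
    by (subst sderiv_eq_sum[OF fin]) (auto simp: qsym_def smultA.scale_left_distrib sum.distrib)
  finally show ?thesis .
qed

lemma Qp_pow_X_mult:
  "(Qp r ^^ k) (X i * F) = X i * (Qp r ^^ k) F + smultA (of_nat k) (sderiv i ((Qp r ^^ (k - 1)) F))"
proof (induction k)
  case (Suc k)
  then have "(Qp r ^^ Suc k) (X i * F)
      = X i * (Qp r ^^ Suc k) F + sderiv i ((Qp r ^^ k) F) + smultA (of_nat k) (sderiv i ((Qp r ^^ k) F))"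
    by (cases k) (simp_all add: Qp_add Qp_X_mult Qp_smultA flip: sderiv_Qp)
  then show ?case
    by (simp add: smultA.scale_left_distrib add_ac)
qed simp

abbreviation E :: "(mon \<Rightarrow>\<^sub>0 'a) \<Rightarrow> mon \<Rightarrow>\<^sub>0 'a" where
  "E \<equiv> expQp iota r"

lemma expQp_eq_sum:
  assumes "(Qp r ^^ N) F = 0"
  shows "E F = (\<Sum>k<N. smultA (iota (1 / of_nat (fact k))) ((Qp r ^^ k) F))"
  unfolding expQp_def
proof (rule Sum_any.expand_superset)
  show "{k. smultA (iota (1 / of_nat (fact k))) ((Qp r ^^ k) F) \<noteq> 0} \<subseteq> {..<N}"
    using Qp_pow_eq_zero_mono[OF assms] by (force simp: not_less[symmetric])
qed simp

lemma Qp_nilpotent: "\<exists>N. (Qp r ^^ N) F = 0"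
  using deg_less_ex[of F] Qp_pow_eq_zero by blast

lemma A_linear_expQp: "A_linear E"
proof (rule A_linearI)
  fix F G :: "mon \<Rightarrow>\<^sub>0 'a"
  obtain N1 N2 where "(Qp r ^^ N1) F = 0" "(Qp r ^^ N2) G = 0"
    using Qp_nilpotent by blast
  then have N: "(Qp r ^^ (N1 + N2)) F = 0" "(Qp r ^^ (N1 + N2)) G = 0"
    using Qp_pow_eq_zero_mono by auto
  then have "(Qp r ^^ (N1 + N2)) (F + G) = 0"
    by (simp add: Qp_pow_add)
  then show "E (F + G) = E F + E G"
    by (simp add: expQp_eq_sum[OF N(1)] expQp_eq_sum[OF N(2)] expQp_eq_sum[of "N1 + N2" "F + G"]
        Qp_pow_add smultA.scale_right_distrib sum.distrib)
next
  fix c and F :: "mon \<Rightarrow>\<^sub>0 'a"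
  obtain N where N: "(Qp r ^^ N) F = 0"
    using Qp_nilpotent by blast
  then have "(Qp r ^^ N) (smultA c F) = 0"
    by (simp add: Qp_pow_smultA)
  then show "E (smultA c F) = smultA c (E F)"
    by (simp add: expQp_eq_sum[OF N] expQp_eq_sum[of N "smultA c F"] Qp_pow_smultA
        smultA.scale_sum_right mult.commute)
qed

lemmas expQp_add = module_hom.add[OF A_linear_expQp]
  and expQp_smultA = module_hom.scale[OF A_linear_expQp]

lemma expQp_one: "E 1 = 1"
proof -
  have "(Qp r ^^ 1) 1 = 0"
    by (rule Qp_pow_eq_zero) (simp add: deg_less_def)
  then have "E 1 = (\<Sum>k<1. smultA (iota (1 / of_nat (fact k))) ((Qp r ^^ k) 1))"
    by (rule expQp_eq_sum)
  then show ?thesis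
    by simp
qed

lemma iota_inverse_fact_Suc: "iota (1 / fact (Suc j)) * of_nat (Suc j) = iota (1 / fact j)"
proof -
  have "(1 / fact (Suc j)) * of_nat (Suc j) = (1 / fact j :: complex)"
    by (simp add: field_simps del: of_nat_Suc)
  then show ?thesis
    by (metis iota_mult iota_of_nat)
qed

lemma expQp_X_mult: "E (X i * F) = X i * E F + sderiv i (E F)"
proof -
  obtain N where N: "(Qp r ^^ N) F = 0"
    using Qp_nilpotent by blast
  then have N': "(Qp r ^^ Suc N) F = 0"
    by simp
  have XF: "(Qp r ^^ Suc N) (X i * F) = 0"
    using Qp_pow_X_mult[of "Suc N" i F] N N' by simp
  have "E (X i * F) = (\<Sum>k<Suc N. smultA (iota (1 / of_nat (fact k))) (X i * (Qp r ^^ k) F))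
      + (\<Sum>k<Suc N. smultA (iota (1 / of_nat (fact k))) (smultA (of_nat k) (sderiv i ((Qp r ^^ (k - 1)) F))))"
    by (simp only: expQp_eq_sum[OF XF] Qp_pow_X_mult smultA.scale_right_distrib sum.distrib)
  also have "(\<Sum>k<Suc N. smultA (iota (1 / of_nat (fact k))) (X i * (Qp r ^^ k) F)) = X i * E F"
    by (simp add: expQp_eq_sum[OF N'] sum_distrib_left smultA_mult(2) distrib_left)
  also have "(\<Sum>k<Suc N. smultA (iota (1 / of_nat (fact k))) (smultA (of_nat k) (sderiv i ((Qp r ^^ (k - 1)) F))))
      = (\<Sum>j<N. smultA (iota (1 / of_nat (fact j))) (sderiv i ((Qp r ^^ j) F)))"
    by (subst sum.lessThan_Suc_shift) (simp add: iota_inverse_fact_Suc del: of_nat_Suc fact_Suc)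
  also have "\<dots> = sderiv i (E F)"
    by (simp add: expQp_eq_sum[OF N] sderiv_sum sderiv_smultA)
  finally show ?thesis .
qed

end

text \<open>Leibniz rule for \<open>\<partial>\<^sub>n (x\<^sup>a x\<^sup>b)\<close>.\<close>

lemma smultA_lookup_add_monoA:
  "smultA (of_nat (lookup (a + b) n) * c) (monoA (a + b - Var n) :: mon \<Rightarrow>\<^sub>0 'a::comm_ring_1)
    = smultA (of_nat (lookup a n) * c) (monoA (a - Var n + b)) + smultA (of_nat (lookup b n) * c) (monoA (a + (b - Var n)))"
proof -
  have left: "lookup a n \<noteq> 0 \<Longrightarrow> a + b - Var n = a - Var n + b"
    and right: "lookup b n \<noteq> 0 \<Longrightarrow> a + b - Var n = a + (b - Var n)"
    by (rule poly_mapping_eqI, auto simp: lookup_add lookup_minus lookup_Var)+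
  have "smultA (of_nat (lookup (a + b) n) * c) (monoA (a + b - Var n) :: mon \<Rightarrow>\<^sub>0 'a)
      = smultA (of_nat (lookup a n) * c) (monoA (a + b - Var n)) + smultA (of_nat (lookup b n) * c) (monoA (a + b - Var n))"
    by (simp add: lookup_add algebra_simps single_add)
  also have "smultA (of_nat (lookup a n) * c) (monoA (a + b - Var n) :: mon \<Rightarrow>\<^sub>0 'a)
      = smultA (of_nat (lookup a n) * c) (monoA (a - Var n + b))"
    by (cases "lookup a n = 0") (simp_all add: left)
  also have "smultA (of_nat (lookup b n) * c) (monoA (a + b - Var n) :: mon \<Rightarrow>\<^sub>0 'a)
      = smultA (of_nat (lookup b n) * c) (monoA (a + (b - Var n)))"
    by (cases "lookup b n = 0") (simp_all add: right)
  finally show ?thesis .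
qed

section \<open>The product \<open>\<bullet>\<^sub>s\<close>\<close>

context bichar
begin

abbreviation bullet_s :: "(mon \<Rightarrow>\<^sub>0 'a) \<Rightarrow> (mon \<Rightarrow>\<^sub>0 'a) \<Rightarrow> mon \<Rightarrow>\<^sub>0 'a" (infixl \<open>\<bullet>\<close> 70) where
  "F \<bullet> G \<equiv> bullet iota (symmetrization iota r) F G"

abbreviation bmon :: "mon \<Rightarrow> mon \<Rightarrow> mon \<Rightarrow>\<^sub>0 'a" where
  "bmon \<equiv> bullet_mon iota (symmetrization iota r)"

lemma embA_mono: "embA iota (mono a) = monoA a"
  by (simp add: embA_def mono_def)

lemma A_linear_lincombK:
  assumes "A_linear \<Phi>"
  shows "\<Phi> (lincombK g T) = lincombK (\<lambda>k. \<Phi> (g k)) T"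
proof (rule K.module_hom_lincomb)
  show "module_hom (\<lambda>c F. smultA (iota c) F) (\<lambda>c F. smultA (iota c) F) \<Phi>"
    using module_hom.add[OF assms] module_hom.scale[OF assms] by (simp add: module_hom_iff K.module_axioms)
qed

lemma lincombK_smultA: "lincombK (\<lambda>k. smultA c (g k)) T = smultA c (lincombK g T)"
  using A_linear_lincombK[OF smultA.module_hom_scale_self] by (rule sym)

lemma lincombK_smultA_prod: "lincombK (\<lambda>(u, w). smultA c (g u w)) T = smultA c (lincombK (\<lambda>(u, w). g u w) T)"
  using lincombK_smultA[of c "\<lambda>(u, w). g u w" T] by (simp add: split_def)

lemma lincombK_delta_mon_pderiv_left:
  "lincombK (\<lambda>(u, w). smultA (of_nat (lookup u n)) (f (u - Var n) w)) (delta_mon a)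
    = smultA (of_nat (lookup a n)) (lincombK (\<lambda>(u, w). f u w) (delta_mon (a - Var n)))"
  using K.lincomb_delta_mon_pderiv_left[of n f a] by simp

lemma lincombK_delta_mon_pderiv_right:
  "lincombK (\<lambda>(u, w). smultA (of_nat (lookup w n)) (f u (w - Var n))) (delta_mon a)
    = smultA (of_nat (lookup a n)) (lincombK (\<lambda>(u, w). f u w) (delta_mon (a - Var n)))"
  using K.lincomb_delta_mon_pderiv_right[of n f a] by simp

definition bmon_part :: "mon \<Rightarrow> mon \<Rightarrow> mon \<Rightarrow> mon \<Rightarrow>\<^sub>0 'a" where
  "bmon_part a1 a2 b = lincombK (\<lambda>(b1, b2). smultA (S a2 b2) (monoA (a1 + b1))) (delta_mon b)"

lemma bmon_eq_lincombK: "bmon a b = lincombK (\<lambda>(a1, a2). bmon_part a1 a2 b) (delta_mon a)"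
  unfolding bullet_mon_def bmon_part_def lincomb_def
  by (simp add: delta_mono split_def smultA.scale_sum_right iota_mult mono_mult embA_mono S_def mult.assoc)

lemma bullet_eq_sum:
  assumes "finite A" "keys F \<subseteq> A" "finite B" "keys G \<subseteq> B"
  shows "F \<bullet> G = (\<Sum>a\<in>A. \<Sum>b\<in>B. smultA (lookup F a * lookup G b) (bmon a b))"
proof -
  have "F \<bullet> G = (\<Sum>a\<in>A. \<Sum>b\<in>keys G. smultA (lookup F a * lookup G b) (bmon a b))"
    unfolding bullet_def by (rule sum.mono_neutral_left) (use assms in \<open>auto simp: in_keys_iff\<close>)
  also have "\<dots> = (\<Sum>a\<in>A. \<Sum>b\<in>B. smultA (lookup F a * lookup G b) (bmon a b))"
    by (intro sum.cong refl sum.mono_neutral_left) (use assms in \<open>auto simp: in_keys_iff\<close>)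
  finally show ?thesis .
qed

lemma A_linear_bullet_left: "A_linear (\<lambda>F. F \<bullet> G)"
proof (rule A_linearI)
  fix F H :: "mon \<Rightarrow>\<^sub>0 'a"
  show "(F + H) \<bullet> G = F \<bullet> G + H \<bullet> G"
    using keys_add[of F H]
    by (subst (1 2 3) bullet_eq_sum[where A="keys F \<union> keys H" and B="keys G"])
      (auto simp: lookup_add algebra_simps smultA.scale_left_distrib sum.distrib)
next
  fix c and F :: "mon \<Rightarrow>\<^sub>0 'a"
  show "smultA c F \<bullet> G = smultA c (F \<bullet> G)"
    by (subst (1 2) bullet_eq_sum[where A="keys F" and B="keys G"])
      (auto simp: keys_smultA smultA.scale_sum_right mult.assoc)
qed

lemma A_linear_bullet_right: "A_linear (\<lambda>G. F \<bullet> G)"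
proof (rule A_linearI)
  fix G H :: "mon \<Rightarrow>\<^sub>0 'a"
  show "F \<bullet> (G + H) = F \<bullet> G + F \<bullet> H"
    using keys_add[of G H]
    by (subst (1 2 3) bullet_eq_sum[where A="keys F" and B="keys G \<union> keys H"])
      (auto simp: lookup_add algebra_simps smultA.scale_left_distrib sum.distrib)
next
  fix c and G :: "mon \<Rightarrow>\<^sub>0 'a"
  show "F \<bullet> smultA c G = smultA c (F \<bullet> G)"
    by (subst (1 2) bullet_eq_sum[where A="keys F" and B="keys G"])
      (auto simp: keys_smultA smultA.scale_sum_right algebra_simps)
qed

lemma bullet_monoA: "monoA a \<bullet> monoA b = bmon a b"
  by (simp add: bullet_def)

lemma bmon_zero_left: "bmon 0 b = monoA b"
proof -
  have "bmon 0 b = lincombK (\<lambda>(b1, b2). if b2 = 0 then monoA b1 else 0) (delta_mon b)"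
    unfolding bmon_eq_lincombK K.lincomb_delta_mon_zero case_prod_conv bmon_part_def
    by (rule K.lincomb_cong) (auto simp: S_zero_left)
  also have "\<dots> = monoA b"
    by (rule K.lincomb_delta_mon_counit_right)
  finally show ?thesis .
qed

lemma one_bullet: "1 \<bullet> G = G"
  using A_linear_eqI[OF A_linear_bullet_right smultA.module_hom_ident]
  by (simp add: bullet_monoA bmon_zero_left flip: single_one)

lemma bmon_Var_left: "bmon (Var i) b = X i * monoA b + sderiv i (monoA b)"
proof -
  have "bmon_part (Var i) 0 b = X i * monoA b"
  proof -
    have "bmon_part (Var i) 0 b = lincombK (\<lambda>(b1, b2). if b2 = 0 then monoA (b1 + Var i) else 0) (delta_mon b)"
      unfolding bmon_part_def by (rule K.lincomb_cong) (auto simp: S_zero_left add.commute)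
    then show ?thesis
      by (simp add: K.lincomb_delta_mon_counit_right X_mult_monoA)
  qed
  moreover have "bmon_part 0 (Var i) b = sderiv i (monoA b)"
  proof -
    have "bmon_part 0 (Var i) b
        = lincombK (\<lambda>(b1, b2). \<Sum>n\<in>keys b. if b2 = Var n then smultA (qsym i n) (monoA b1) else 0) (delta_mon b)"
      unfolding bmon_part_def
    proof (rule K.lincomb_cong, clarify)
      fix b1 b2
      assume "(b1, b2) \<in> keys (delta_mon b)"
      then have "S (Var i) b2 = (\<Sum>n\<in>keys b. if b2 = Var n then qsym i n else 0)"
        by (intro S_Var_eq_sum keys_delta_mon_right) simp_all
      then show "smultA (S (Var i) b2) (monoA (0 + b1)) = (\<Sum>n\<in>keys b. if b2 = Var n then smultA (qsym i n) (monoA b1) else 0)"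
        by (auto simp: smultA.scale_sum_left simp del: smultA_single intro!: sum.cong)
    qed
    also have "\<dots> = (\<Sum>n\<in>keys b. lincombK (\<lambda>(b1, b2). if b2 = Var n then smultA (qsym i n) (monoA b1) else 0) (delta_mon b))"
      by (subst K.lincomb_sum_fun[symmetric]) (simp add: split_def)
    also have "\<dots> = sderiv i (monoA b)"
      by (simp add: K.lincomb_delta_mon_Var_right sderiv_monoA mult.commute)
    finally show ?thesis .
  qed
  ultimately show ?thesis
    by (simp add: bmon_eq_lincombK K.lincomb_delta_mon_Var)
qed

lemma X_bullet: "X i \<bullet> G = X i * G + sderiv i G"
  by (rule A_linear_eqI[OF A_linear_bullet_right A_linear_add[OF A_linear_X_mult A_linear_sderiv]])
    (simp add: bullet_monoA bmon_Var_left)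

lemma sderiv_monoA_eq_sum:
  assumes "finite V" "keys a \<subseteq> V"
  shows "sderiv i (monoA a) = (\<Sum>n\<in>V. smultA (of_nat (lookup a n) * qsym i n) (monoA (a - Var n)))"
  using assms by (simp add: sderiv_eq_sum[where V=V] pderivA_monoA mult.commute)

lemma bmon_part_add_Var_left: "bmon_part (a1 + Var i) a2 b = X i * bmon_part a1 a2 b"
  unfolding bmon_part_def A_linear_lincombK[OF A_linear_X_mult]
  by (rule K.lincomb_cong) (auto simp: smultA_mult(2)[symmetric] mult_single add_ac)

lemma bmon_part_add_Var_right:
  "bmon_part a1 (a2 + Var i) b = (\<Sum>n\<in>keys b. smultA (of_nat (lookup b n) * qsym i n) (bmon_part a1 a2 (b - Var n)))"
proof -
  let ?f = "\<lambda>n b1 b2. smultA (qsym i n) (smultA (S a2 b2) (monoA (a1 + b1)))"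
  have "bmon_part a1 (a2 + Var i) b
      = lincombK (\<lambda>(b1, b2). \<Sum>n\<in>keys b. smultA (of_nat (lookup b2 n)) (?f n b1 (b2 - Var n))) (delta_mon b)"
    unfolding bmon_part_def
  proof (rule K.lincomb_cong, clarify)
    fix b1 b2
    assume "(b1, b2) \<in> keys (delta_mon b)"
    then have "S (a2 + Var i) b2 = (\<Sum>n\<in>keys b. of_nat (lookup b2 n) * (qsym i n * S a2 (b2 - Var n)))"
      unfolding S_add_Var by (intro sum_lookup_superset keys_delta_mon_right) simp_all
    then show "smultA (S (a2 + Var i) b2) (monoA (a1 + b1))
        = (\<Sum>n\<in>keys b. smultA (of_nat (lookup b2 n)) (?f n b1 (b2 - Var n)))"
      by (simp add: smultA.scale_sum_left mult.assoc del: smultA_single)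
  qed
  also have "\<dots> = (\<Sum>n\<in>keys b. smultA (of_nat (lookup b n)) (lincombK (\<lambda>(b1, b2). ?f n b1 b2) (delta_mon (b - Var n))))"
    unfolding K.lincomb_sum_fun_prod by (intro sum.cong refl lincombK_delta_mon_pderiv_right)
  also have "\<dots> = (\<Sum>n\<in>keys b. smultA (of_nat (lookup b n) * qsym i n) (bmon_part a1 a2 (b - Var n)))"
    by (simp only: lincombK_smultA_prod bmon_part_def) (simp only: smultA.scale_scale)
  finally show ?thesis .
qed

lemma bmon_add_Var_left:
  "bmon (a + Var i) b = X i * bmon a b + (\<Sum>n\<in>keys b. smultA (of_nat (lookup b n) * qsym i n) (bmon a (b - Var n)))"
proof -
  have "bmon (a + Var i) b = lincombK (\<lambda>(a1, a2). bmon_part (a1 + Var i) a2 b) (delta_mon a)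
      + lincombK (\<lambda>(a1, a2). bmon_part a1 (a2 + Var i) b) (delta_mon a)"
    by (simp add: bmon_eq_lincombK K.lincomb_delta_mon_add_Var)
  also have "lincombK (\<lambda>(a1, a2). bmon_part (a1 + Var i) a2 b) (delta_mon a) = X i * bmon a b"
    by (simp add: bmon_part_add_Var_left bmon_eq_lincombK A_linear_lincombK[OF A_linear_X_mult] split_def)
  also have "lincombK (\<lambda>(a1, a2). bmon_part a1 (a2 + Var i) b) (delta_mon a)
      = (\<Sum>n\<in>keys b. smultA (of_nat (lookup b n) * qsym i n) (bmon a (b - Var n)))"
    by (simp only: bmon_part_add_Var_right K.lincomb_sum_fun_prod lincombK_smultA_prod bmon_eq_lincombK)
  finally show ?thesis .
qed

lemma sderiv_bmon_part:
  assumes "finite V" "keys a1 \<subseteq> V" "keys b \<subseteq> V"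
  shows "sderiv i (bmon_part a1 a2 b)
    = (\<Sum>n\<in>V. smultA (qsym i n) (smultA (of_nat (lookup a1 n)) (bmon_part (a1 - Var n) a2 b)))
      + (\<Sum>n\<in>V. smultA (qsym i n) (smultA (of_nat (lookup b n)) (bmon_part a1 a2 (b - Var n))))"
proof -
  let ?f = "\<lambda>u w. smultA (S a2 w) (monoA (a1 + u))"
  have "sderiv i (bmon_part a1 a2 b) = lincombK (\<lambda>(b1, b2). \<Sum>n\<in>V.
        smultA (qsym i n) (smultA (of_nat (lookup a1 n)) (smultA (S a2 b2) (monoA (a1 - Var n + b1))))
      + smultA (qsym i n) (smultA (of_nat (lookup b1 n)) (?f (b1 - Var n) b2))) (delta_mon b)"
    unfolding bmon_part_def A_linear_lincombK[OF A_linear_sderiv]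
  proof (rule K.lincomb_cong, clarify)
    fix b1 b2
    assume "(b1, b2) \<in> keys (delta_mon b)"
    with assms have kV: "keys (a1 + b1) \<subseteq> V"
      using keys_add[of a1 b1] keys_delta_mon_left by blast
    show "sderiv i (smultA (S a2 b2) (monoA (a1 + b1))) = (\<Sum>n\<in>V.
        smultA (qsym i n) (smultA (of_nat (lookup a1 n)) (smultA (S a2 b2) (monoA (a1 - Var n + b1))))
      + smultA (qsym i n) (smultA (of_nat (lookup b1 n)) (?f (b1 - Var n) b2)))"
      by (simp only: sderiv_smultA sderiv_monoA_eq_sum[OF assms(1) kV] smultA_lookup_add_monoA)
        (simp add: smultA.scale_sum_right smultA.scale_right_distrib mult_ac del: smultA_single)
  qed
  also have "\<dots> = (\<Sum>n\<in>V. smultA (qsym i n) (smultA (of_nat (lookup a1 n)) (bmon_part (a1 - Var n) a2 b)))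
      + (\<Sum>n\<in>V. smultA (qsym i n) (lincombK (\<lambda>(b1, b2). smultA (of_nat (lookup b1 n)) (?f (b1 - Var n) b2)) (delta_mon b)))"
    by (simp only: K.lincomb_sum_fun_prod K.lincomb_add_fun_prod sum.distrib lincombK_smultA_prod bmon_part_def)
  also have "\<dots> = (\<Sum>n\<in>V. smultA (qsym i n) (smultA (of_nat (lookup a1 n)) (bmon_part (a1 - Var n) a2 b)))
      + (\<Sum>n\<in>V. smultA (qsym i n) (smultA (of_nat (lookup b n)) (bmon_part a1 a2 (b - Var n))))"
    by (simp only: lincombK_delta_mon_pderiv_left[where f="?f"] bmon_part_def)
  finally show ?thesis .
qed

lemma sderiv_bmon:
  assumes "finite V" "keys a \<subseteq> V" "keys b \<subseteq> V"
  shows "sderiv i (bmon a b)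
    = (\<Sum>n\<in>V. smultA (of_nat (lookup a n) * qsym i n) (bmon (a - Var n) b))
      + (\<Sum>n\<in>V. smultA (of_nat (lookup b n) * qsym i n) (bmon a (b - Var n)))"
proof -
  let ?f = "\<lambda>u w. bmon_part u w b"
  have "sderiv i (bmon a b) = lincombK (\<lambda>(a1, a2).
        (\<Sum>n\<in>V. smultA (qsym i n) (smultA (of_nat (lookup a1 n)) (?f (a1 - Var n) a2)))
      + (\<Sum>n\<in>V. smultA (qsym i n) (smultA (of_nat (lookup b n)) (bmon_part a1 a2 (b - Var n))))) (delta_mon a)"
    unfolding bmon_eq_lincombK A_linear_lincombK[OF A_linear_sderiv]
  proof (rule K.lincomb_cong, clarify)
    fix a1 a2
    assume "(a1, a2) \<in> keys (delta_mon a)"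
    with assms have "keys a1 \<subseteq> V"
      using keys_delta_mon_left by blast
    with assms show "sderiv i (bmon_part a1 a2 b)
      = (\<Sum>n\<in>V. smultA (qsym i n) (smultA (of_nat (lookup a1 n)) (?f (a1 - Var n) a2)))
      + (\<Sum>n\<in>V. smultA (qsym i n) (smultA (of_nat (lookup b n)) (bmon_part a1 a2 (b - Var n))))"
      by (intro sderiv_bmon_part)
  qed
  also have "\<dots> = (\<Sum>n\<in>V. smultA (qsym i n) (smultA (of_nat (lookup a n)) (bmon (a - Var n) b)))
      + (\<Sum>n\<in>V. smultA (qsym i n) (smultA (of_nat (lookup b n)) (bmon a (b - Var n))))"
    by (simp only: K.lincomb_add_fun_prod K.lincomb_sum_fun_prod lincombK_smultA_prod
        lincombK_delta_mon_pderiv_left[where f="?f"] bmon_eq_lincombK)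
  finally show ?thesis
    by (simp only: smultA.scale_scale mult.commute)
qed

lemma bullet_X_mult_left: "(X i * H) \<bullet> K = X i * (H \<bullet> K) + H \<bullet> sderiv i K"
proof (rule A_bilinear_eqI[where \<Phi>="\<lambda>H K. (X i * H) \<bullet> K" and \<Psi>="\<lambda>H K. X i * (H \<bullet> K) + H \<bullet> sderiv i K"])
  show "A_linear (\<lambda>H. (X i * H) \<bullet> K)" "A_linear (\<lambda>K. (X i * H) \<bullet> K)" for H K
    using module_hom_compose[OF A_linear_X_mult A_linear_bullet_left] A_linear_bullet_right
    by (simp_all add: comp_def)
  show "A_linear (\<lambda>H. X i * (H \<bullet> K) + H \<bullet> sderiv i K)" "A_linear (\<lambda>K. X i * (H \<bullet> K) + H \<bullet> sderiv i K)" for H K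
    using A_linear_add[OF module_hom_compose[OF A_linear_bullet_left A_linear_X_mult] A_linear_bullet_left]
      A_linear_add[OF module_hom_compose[OF A_linear_bullet_right A_linear_X_mult]
        module_hom_compose[OF A_linear_sderiv A_linear_bullet_right]]
    by (simp_all add: comp_def)
  show "(X i * monoA a) \<bullet> monoA b = X i * (monoA a \<bullet> monoA b) + monoA a \<bullet> sderiv i (monoA b)" for a b
    by (simp add: X_mult_monoA bullet_monoA bmon_add_Var_left sderiv_monoA
        module_hom.sum[OF A_linear_bullet_right] module_hom.scale[OF A_linear_bullet_right] del: smultA_single)
qed

lemma sderiv_bullet: "sderiv i (H \<bullet> K) = sderiv i H \<bullet> K + H \<bullet> sderiv i K"
proof (rule A_bilinear_eqI[where \<Phi>="\<lambda>H K. sderiv i (H \<bullet> K)" and \<Psi>="\<lambda>H K. sderiv i H \<bullet> K + H \<bullet> sderiv i K"])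
  show "A_linear (\<lambda>H. sderiv i (H \<bullet> K))" "A_linear (\<lambda>K. sderiv i (H \<bullet> K))" for H K
    using module_hom_compose[OF A_linear_bullet_left A_linear_sderiv]
      module_hom_compose[OF A_linear_bullet_right A_linear_sderiv]
    by (simp_all add: comp_def)
  show "A_linear (\<lambda>H. sderiv i H \<bullet> K + H \<bullet> sderiv i K)" "A_linear (\<lambda>K. sderiv i H \<bullet> K + H \<bullet> sderiv i K)" for H K
    using A_linear_add[OF module_hom_compose[OF A_linear_sderiv A_linear_bullet_left] A_linear_bullet_left]
      A_linear_add[OF A_linear_bullet_right module_hom_compose[OF A_linear_sderiv A_linear_bullet_right]]
    by (simp_all add: comp_def)
  show "sderiv i (monoA a \<bullet> monoA b) = sderiv i (monoA a) \<bullet> monoA b + monoA a \<bullet> sderiv i (monoA b)" for a b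
  proof -
    let ?V = "keys a \<union> keys b"
    show ?thesis
      by (simp add: bullet_monoA sderiv_bmon[of ?V] sderiv_monoA_eq_sum[of ?V]
          module_hom.sum[OF A_linear_bullet_right] module_hom.scale[OF A_linear_bullet_right]
          module_hom.sum[OF A_linear_bullet_left] module_hom.scale[OF A_linear_bullet_left] del: smultA_single)
  qed
qed

lemma X_bullet_assoc: "X i \<bullet> (H \<bullet> K) = (X i \<bullet> H) \<bullet> K"
proof -
  have "X i \<bullet> (H \<bullet> K) = X i * (H \<bullet> K) + sderiv i H \<bullet> K + H \<bullet> sderiv i K"
    by (simp add: X_bullet sderiv_bullet add.assoc)
  also have "\<dots> = (X i * H + sderiv i H) \<bullet> K"
    by (simp add: module_hom.add[OF A_linear_bullet_left] bullet_X_mult_left add_ac)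
  finally show ?thesis
    by (simp add: X_bullet)
qed

lemma expQp_monoA_add: "E (monoA (a + b)) = E (monoA a) \<bullet> E (monoA b)"
proof (induction a rule: mon_induct)
  case zero
  then show ?case by (simp add: expQp_one one_bullet single_one)
next
  case (add_Var a i)
  have "E (monoA (a + Var i + b)) = E (X i * monoA (a + b))"
    by (simp add: X_mult_monoA add_ac)
  also have "\<dots> = X i \<bullet> E (monoA (a + b))"
    by (simp add: expQp_X_mult X_bullet)
  also have "\<dots> = (X i \<bullet> E (monoA a)) \<bullet> E (monoA b)"
    by (simp add: add_Var X_bullet_assoc)
  finally show ?case
    by (simp add: expQp_X_mult X_bullet flip: X_mult_monoA)
qed

lemma expQp_mult: "E (F * G) = E F \<bullet> E G"
proof (rule A_bilinear_eqI[where \<Phi>="\<lambda>F G. E (F * G)" and \<Psi>="\<lambda>F G. E F \<bullet> E G"])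
  show "A_linear (\<lambda>F. E (F * G))" "A_linear (\<lambda>G. E (F * G))" for F G
    by (auto intro!: A_linearI simp: distrib_left distrib_right expQp_add smultA_mult[symmetric] expQp_smultA)
  show "A_linear (\<lambda>F. E F \<bullet> E G)" "A_linear (\<lambda>G. E F \<bullet> E G)" for F G
    using module_hom_compose[OF A_linear_expQp A_linear_bullet_left]
      module_hom_compose[OF A_linear_expQp A_linear_bullet_right]
    by (simp_all add: comp_def)
  show "E (monoA a * monoA b) = E (monoA a) \<bullet> E (monoA b)" for a b
    by (simp add: mult_single expQp_monoA_add)
qed

end

section \<open>The two closed forms of \<open>e\<^sup>Q\<^sup>p\<close>\<close>

lemma sum_list_map_Var_mon_word: "sum_list (map Var (mon_word a)) = a"
proof (rule poly_mapping_eqI)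
  fix j
  have lookup_sum_list: "lookup (sum_list ms) j = sum_list (map (\<lambda>m. lookup m j) ms)" for ms :: "mon list"
    by (induction ms) (simp_all add: lookup_add)
  have sum_list_concat: "sum_list (concat xss) = sum_list (map sum_list xss)" for xss :: "nat list list"
    by (induction xss) simp_all
  have "lookup (sum_list (map Var (mon_word a))) j
      = sum_list (map (\<lambda>i. if j = i then lookup a i else 0) (sorted_list_of_set (keys a)))"
    unfolding mon_word_def lookup_sum_list
    by (simp add: map_concat sum_list_concat comp_def lookup_Var sum_list_replicate)
      (auto intro!: arg_cong[where f=sum_list] map_cong)
  also have "\<dots> = (\<Sum>i\<in>keys a. if j = i then lookup a i else 0)"
    by (simp add: sum_list_distinct_conv_sum_set)
  also have "\<dots> = lookup a j"
    by (simp add: in_keys_iff)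
  finally show "lookup (sum_list (map Var (mon_word a))) j = lookup a j" .
qed

context bichar
begin

lemma bullet_word_eq_expQp: "bullet_word iota (symmetrization iota r) ws = E (monoA (sum_list (map Var ws)))"
proof (induction ws)
  case Nil
  then show ?case by (simp add: bullet_word_def expQp_one single_one)
next
  case (Cons i ws)
  have "bullet_word iota (symmetrization iota r) (i # ws) = X i \<bullet> bullet_word iota (symmetrization iota r) ws"
    by (simp add: bullet_word_def embA_mono xv_def)
  also have "\<dots> = E (X i * monoA (sum_list (map Var ws)))"
    by (simp add: Cons X_bullet expQp_X_mult)
  finally show ?case
    by (simp add: X_mult_monoA add.commute)
qed

lemma expQp_embA: "E (embA iota P) = (\<Sum>a\<in>keys P. smultA (iota (lookup P a)) (E (monoA a)))"
proof -
  have "embA iota P = (\<Sum>a\<in>keys P. smultA (iota (lookup P a)) (monoA a))"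
    by (rule poly_mapping_eqI)
      (simp add: embA_def lookup_map when_def lookup_sum lookup_single sum.delta' in_keys_iff)
  then show ?thesis
    by (simp add: module_hom.sum[OF A_linear_expQp] expQp_smultA del: smultA_single)
qed

lemma expQp_embA_eq_bullet_poly: "E (embA iota P) = bullet_poly iota (symmetrization iota r) P"
  by (simp add: expQp_embA bullet_poly_def bullet_word_eq_expQp sum_list_map_Var_mon_word)

definition EQ_mon :: "mon \<Rightarrow> mon \<Rightarrow>\<^sub>0 'a" where
  "EQ_mon a = lincombK (\<lambda>(u, w). smultA (rho u) (monoA w)) (delta_mon a)"

lemma EQ_mon_zero: "EQ_mon 0 = 1"
  by (simp add: EQ_mon_def K.lincomb_delta_mon_zero rho_zero single_one)

lemma pderivA_EQ_mon: "pderivA n (EQ_mon a) = smultA (of_nat (lookup a n)) (EQ_mon (a - Var n))"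
proof -
  have "pderivA n (EQ_mon a) = lincombK (\<lambda>(u, w). smultA (of_nat (lookup w n)) (smultA (rho u) (monoA (w - Var n)))) (delta_mon a)"
    unfolding EQ_mon_def A_linear_lincombK[OF A_linear_pderivA]
    by (rule K.lincomb_cong) (auto simp: pderivA_smultA pderivA_monoA mult.commute simp del: smultA_single)
  also have "\<dots> = smultA (of_nat (lookup a n)) (EQ_mon (a - Var n))"
    unfolding EQ_mon_def by (rule lincombK_delta_mon_pderiv_right)
  finally show ?thesis .
qed

lemma EQ_mon_add_Var: "EQ_mon (a + Var i) = X i * EQ_mon a + sderiv i (EQ_mon a)"
proof -
  let ?f = "\<lambda>n u w. smultA (qsym i n) (smultA (rho u) (monoA w))"
  have "lincombK (\<lambda>(u, w). smultA (rho (u + Var i)) (monoA w)) (delta_mon a)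
      = lincombK (\<lambda>(u, w). \<Sum>n\<in>keys a. smultA (of_nat (lookup u n)) (?f n (u - Var n) w)) (delta_mon a)"
  proof (rule K.lincomb_cong, clarify)
    fix u w
    assume "(u, w) \<in> keys (delta_mon a)"
    then have "rho (u + Var i) = (\<Sum>n\<in>keys a. of_nat (lookup u n) * (qsym i n * rho (u - Var n)))"
      unfolding rho_add_Var by (intro sum_lookup_superset keys_delta_mon_left) simp_all
    then show "smultA (rho (u + Var i)) (monoA w) = (\<Sum>n\<in>keys a. smultA (of_nat (lookup u n)) (?f n (u - Var n) w))"
      by (simp add: smultA.scale_sum_left mult.assoc del: smultA_single)
  qed
  also have "\<dots> = (\<Sum>n\<in>keys a. smultA (of_nat (lookup a n)) (lincombK (\<lambda>(u, w). ?f n u w) (delta_mon (a - Var n))))"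
    unfolding K.lincomb_sum_fun_prod by (intro sum.cong refl lincombK_delta_mon_pderiv_left)
  also have "\<dots> = (\<Sum>n\<in>keys a. smultA (qsym i n) (pderivA n (EQ_mon a)))"
    by (simp only: lincombK_smultA_prod EQ_mon_def[symmetric] pderivA_EQ_mon) (simp only: smultA.scale_scale mult.commute)
  also have "\<dots> = (\<Sum>n\<in>keys a \<union> vars (EQ_mon a). smultA (qsym i n) (pderivA n (EQ_mon a)))"
    by (rule sum.mono_neutral_left) (auto simp: in_keys_iff pderivA_EQ_mon)
  also have "\<dots> = sderiv i (EQ_mon a)"
    by (rule sderiv_eq_sum[symmetric]) auto
  finally have left: "lincombK (\<lambda>(u, w). smultA (rho (u + Var i)) (monoA w)) (delta_mon a) = sderiv i (EQ_mon a)" .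
  have right: "lincombK (\<lambda>(u, w). smultA (rho u) (monoA (w + Var i))) (delta_mon a) = X i * EQ_mon a"
    unfolding EQ_mon_def A_linear_lincombK[OF A_linear_X_mult]
    by (rule K.lincomb_cong) (auto simp: mult_single add.commute)
  show ?thesis
    unfolding EQ_mon_def[of "a + Var i"] K.lincomb_delta_mon_add_Var case_prod_conv left right
    by (rule add.commute)
qed

lemma expQp_monoA_eq_EQ_mon: "E (monoA a) = EQ_mon a"
proof (induction a rule: mon_induct)
  case zero
  then show ?case by (simp add: EQ_mon_zero expQp_one single_one)
next
  case (add_Var a i)
  then show ?case by (simp add: EQ_mon_add_Var expQp_X_mult flip: X_mult_monoA)
qed

lemma EQ_eq_sum: "EQ iota r P = (\<Sum>a\<in>keys P. smultA (iota (lookup P a)) (EQ_mon a))"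
proof -
  have "EQ iota r P = lincombK (\<lambda>(u, v, w). smultA (R u v) (monoA w)) (delta2 P)"
    unfolding EQ_def lincomb_def by (simp add: split_def embA_mono R_def tensor_mono iota_mult)
  also have "\<dots> = (\<Sum>(u, w)\<in>keys (delta P). \<Sum>(u1, u2)\<in>keys (delta (mono u)).
      smultA (iota (lookup (delta P) (u, w) * lookup (delta (mono u)) (u1, u2))) (smultA (R u1 u2) (monoA w)))"
    unfolding delta2_def by (simp add: K.lincomb_sum split_def del: smultA_single)
  also have "\<dots> = (\<Sum>(u, w)\<in>keys (delta P). smultA (iota (lookup (delta P) (u, w))) (smultA (rho u) (monoA w)))"
  proof (rule sum.cong[OF refl], clarify)
    fix u w
    have "rho u = (\<Sum>(u1, u2)\<in>keys (delta (mono u)). iota (lookup (delta (mono u)) (u1, u2)) * R u1 u2)"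
      by (simp add: rho_def lincomb_def delta_mono split_def)
    then show "(\<Sum>(u1, u2)\<in>keys (delta (mono u)).
        smultA (iota (lookup (delta P) (u, w) * lookup (delta (mono u)) (u1, u2))) (smultA (R u1 u2) (monoA w)))
      = smultA (iota (lookup (delta P) (u, w))) (smultA (rho u) (monoA w))"
      by (simp add: smultA.scale_sum_left smultA.scale_sum_right split_def iota_mult mult.assoc del: smultA_single)
  qed
  also have "\<dots> = lincombK (\<lambda>(u, w). smultA (rho u) (monoA w)) (delta P)"
    by (simp add: lincomb_def split_def)
  also have "\<dots> = (\<Sum>a\<in>keys P. smultA (iota (lookup P a)) (EQ_mon a))"
    unfolding delta_def by (simp add: K.lincomb_sum K.lincomb_map_scale EQ_mon_def)
  finally show ?thesis .
qed

lemma expQp_embA_eq_EQ: "E (embA iota P) = EQ iota r P"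
  by (simp add: expQp_embA EQ_eq_sum expQp_monoA_eq_EQ_mon)

end

theorem theorem3p3:
  fixes iota :: "complex \<Rightarrow> 'a::comm_ring_1"
    and r :: "T2 \<Rightarrow> 'a"
  assumes "calg_hom iota"
    and "bicharacter iota r"
  shows "(\<forall>P. expQp iota r (embA iota P) = EQ iota r P)
    \<and> (\<forall>P. expQp iota r (embA iota P) = bullet_poly iota (symmetrization iota r) P)
    \<and> (\<forall>F G. expQp iota r (F + G) = expQp iota r F + expQp iota r G)
    \<and> (\<forall>c F. expQp iota r (smultA c F) = smultA c (expQp iota r F))
    \<and> (\<forall>F G. expQp iota r (F * G) = bullet iota (symmetrization iota r) (expQp iota r F) (expQp iota r G))
    \<and> expQp iota r 1 = 1"
proof -
  interpret bichar iota r
    using assms by unfold_locales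
  show ?thesis
    using expQp_embA_eq_EQ expQp_embA_eq_bullet_poly expQp_add expQp_smultA expQp_mult expQp_one
    by blast
qed

end
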